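(* Let $c\in\mathbb R$ and assume one of the following: (a) there exists a solution $z\in C^0[0,1]\cap C^1\big((0,1)\setminus\{\alpha\}\big)$ of the first-order problem $\dot z = h-c-\frac{D g}{z}$ in $(0,\alpha)\cup(\alpha,1)$, $z<0$ in $(0,\alpha)$, $z>0$ in $(\alpha,1)$, $z(0)=z(\alpha)=z(1)=0$, and either (i) $\alpha\neq\gamma$, or (ii) $\alpha=\gamma$ and there exist $L>0$ and $\tau\in(0,1)$ such that $|g(\phi)|\ge L|\phi-\gamma|^\tau$ in a full neighborhood of $\gamma$; (b) $\alpha<\gamma$, there exist $L>0$ and $\tau\in(0,1)$ such that $|g(\phi)|\ge L|\phi-\gamma|^\tau$ in a full neighborhood of $\gamma$, and there exists a solution $z\in C^0[0,1]\cap C^1\big((0,1)\setminus\{\alpha,\gamma\}\big)$ of $\dot z = h-c-\frac{D g}{z}$ in $(0,\alpha)\cup(\alpha,\gamma)\cup(\gamma,1)$, $z<0$ in $(0,\alpha)$, $z>0$ in $(\alpha,\gamma)\cup(\gamma,1)$, $z(0)=z(\alpha)=z(1)=0$, with moreover $z(\gamma)=0$. Then the equation $\rho_t+f(\rho)_x=(D(\rho)\rho_x)_x+g(\rho)$ admits a wavefront with speed $c$ whose profile $\phi$ satisfies $\phi(-\infty)=1$ and $\phi(+\infty)=0$.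
   Context: We consider $\rho_t+f(\rho)_x=(D(\rho)\rho_x)_x+g(\rho)$, $t\ge0$, $x\in\mathbb R$, with $h:=\dot f$. Assumptions: $f\in C^1[0,1]$, $f(0)=0$; $D\in C^1[0,1]$ with $D>0$ in $(0,\alpha)$ and $D<0$ in $(\alpha,1)$ for some $\alpha\in(0,1)$; $g\in C^0[0,1]$ with $g<0$ in $(0,\gamma)$, $g>0$ in $(\gamma,1)$, $g(0)=g(\gamma)=g(1)=0$ for some $\gamma\in(0,1)$. A traveling wave $\rho(x,t)=\phi(x-ct)$ has profile satisfying (in a weak sense) $(D(\phi)\phi')'+(c-h(\phi))\phi'+g(\phi)=0$; a wavefront is a traveling wave defined on all of $\mathbb R$ with monotone non-constant profile connecting the equilibria. *)

theory Defs
  imports "HOL-Analysis.Analysis"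
begin

definition test_fun :: "(real \<Rightarrow> real) \<Rightarrow> bool" where
  "test_fun \<psi> \<longleftrightarrow> (\<forall>n x. ((deriv ^^ n) \<psi>) differentiable (at x)) \<and> bounded {x. \<psi> x \<noteq> 0}"

definition loc_int :: "(real \<Rightarrow> real) \<Rightarrow> bool" where
  "loc_int u \<longleftrightarrow> (\<forall>a b. set_integrable lborel {a..b} u)"

definition tw_profile ::
  "(real \<Rightarrow> real) \<Rightarrow> (real \<Rightarrow> real) \<Rightarrow> (real \<Rightarrow> real) \<Rightarrow> real \<Rightarrow> (real \<Rightarrow> real) \<Rightarrow> bool" where
  "tw_profile D f g c \<phi> \<longleftrightarrow>
     continuous_on UNIV \<phi> \<and> (\<forall>\<xi>. \<phi> \<xi> \<in> {0..1}) \<and>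
     (\<exists>dphi. loc_int dphi \<and>
        (\<forall>\<psi>. test_fun \<psi> \<longrightarrow>
            (LINT \<xi>|lborel. \<phi> \<xi> * deriv \<psi> \<xi>) = - (LINT \<xi>|lborel. dphi \<xi> * \<psi> \<xi>)) \<and>
        loc_int (\<lambda>\<xi>. D (\<phi> \<xi>) * dphi \<xi>) \<and>
        (\<forall>\<psi>. test_fun \<psi> \<longrightarrow>
            (LINT \<xi>|lborel. (D (\<phi> \<xi>) * dphi \<xi> - f (\<phi> \<xi>) + c * \<phi> \<xi>) * deriv \<psi> \<xi>
                             - g (\<phi> \<xi>) * \<psi> \<xi>) = 0))"

definition wavefront ::
  "(real \<Rightarrow> real) \<Rightarrow> (real \<Rightarrow> real) \<Rightarrow> (real \<Rightarrow> real) \<Rightarrow> real \<Rightarrow> (real \<Rightarrow> real) \<Rightarrow> bool" where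
  "wavefront D f g c \<phi> \<longleftrightarrow> tw_profile D f g c \<phi> \<and> (mono \<phi> \<or> antimono \<phi>) \<and> (\<exists>x y. \<phi> x \<noteq> \<phi> y)"

definition holder_below :: "(real \<Rightarrow> real) \<Rightarrow> real \<Rightarrow> bool" where
  "holder_below g \<gamma> \<longleftrightarrow> (\<exists>L \<tau> \<delta>. L > 0 \<and> 0 < \<tau> \<and> \<tau> < 1 \<and> \<delta> > 0 \<and>
      (\<forall>u\<in>{0..1}. \<bar>u - \<gamma>\<bar> < \<delta> \<longrightarrow> \<bar>g u\<bar> \<ge> L * \<bar>u - \<gamma>\<bar> powr \<tau>))"

end

theory Submission
  imports Defs
begin

(* Along a decreasing wavefront, z(\<phi>) = D(\<phi>) \<phi>' turns the profile equation into the
   first-order problem z' = h - c - D g / z, and conversely a solution z yields the profile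
   as the inverse of \<xi>(u) = \<integral> D/z, which is strictly decreasing because D/z < 0 away from
   the zeros of z.  The analytic content is the integrability of D/z at the interior zeros
   \<alpha> (and \<gamma>) of z.  Where g(\<alpha>) \<noteq> 0, the identity (D/z) g = h - c - z' gives an integrable
   majorant.  If \<alpha> = \<gamma>, the function -D/z solves a Riccati equation whose quadratic term,
   controlled by the lower Hoelder bound on g, bounds it by C |u - \<alpha>|^(-\<tau>).  At \<gamma> > \<alpha>,
   where D < 0, a comparison argument gives z \<ge> \<beta> |u - \<gamma>|^((1+\<tau>)/2).  The weak form of
   the equation then holds because the flux z(\<phi>) - f(\<phi>) + c \<phi> has derivative -g(\<phi>)
   off finitely many points. *)

section \<open>Elementary real analysis\<close>

lemma ge_right_endpoint_if_decreasing_above: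
  fixes F :: "real \<Rightarrow> real"
  assumes cont: "continuous_on {a..b} F" and Fb: "T < F b"
    and decr: "\<And>x. x \<in> {a<..b} \<Longrightarrow> T < F x \<Longrightarrow> \<exists>d. (F has_real_derivative d) (at x) \<and> d < 0"
    and x: "x \<in> {a..b}"
  shows "F b \<le> F x"
proof (rule ccontr)
  assume less: "\<not> F b \<le> F x"
  obtain p where p: "p \<in> {x..b}" and max: "\<And>y. y \<in> {x..b} \<Longrightarrow> F y \<le> F p"
    using continuous_attains_sup[of "{x..b}" F] continuous_on_subset[OF cont] x by auto
  have "F b \<le> F p" using max x by auto
  with less Fb p x have "p \<in> {a<..b}" "T < F p" "x < p"
    by (auto simp: order.order_iff_strict)
  with decr obtain d where "d > 0" and left: "\<And>h. 0 < h \<Longrightarrow> h < d \<Longrightarrow> F p < F (p - h)"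
    using DERIV_neg_dec_left by blast
  define h where "h = min (d/2) (p - x)"
  have "0 < h" "h < d" "p - h \<in> {x..b}" using \<open>d > 0\<close> \<open>x < p\<close> p unfolding h_def by auto
  then show False using left max by fastforce
qed

lemma integrable_on_Icc_if_dominated:
  fixes k G :: "real \<Rightarrow> real"
  assumes "continuous_on {a<..<b} k" "G integrable_on {a..b}" "\<And>x. x \<in> {a<..<b} \<Longrightarrow> \<bar>k x\<bar> \<le> G x"
  shows "k integrable_on {a..b}"
proof -
  have "k integrable_on {a<..<b}"
    by (rule measurable_bounded_by_integrable_imp_integrable[where g=G])
       (use assms in \<open>auto simp: integrable_on_Icc_iff_Ioo
          intro: continuous_imp_measurable_on_sets_lebesgue\<close>)
  then show ?thesis by (simp add: integrable_on_Icc_iff_Ioo)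
qed

lemma integrable_on_powr_from_point:
  fixes q :: real
  assumes "q < 1" "0 \<le> \<epsilon>"
  shows "(\<lambda>x. (x - e) powr (- q)) integrable_on {e..e+\<epsilon>}"
  using integrable_shift_real_ivl[OF integrable_on_powr_from_0[of "- q" \<epsilon>], of "- e"] assms
  by (simp add: add.commute)

lemma integrable_on_powr_to_point:
  fixes q :: real
  assumes "q < 1" "0 \<le> \<epsilon>"
  shows "(\<lambda>x. (e - x) powr (- q)) integrable_on {e-\<epsilon>..e}"
proof -
  have "(\<lambda>x. (x - (- e)) powr (- q)) integrable_on {- e..- e + \<epsilon>}"
    by (rule integrable_on_powr_from_point[OF assms])
  then have "(\<lambda>x. (e - (- x)) powr (- q)) integrable_on {- e..- (e - \<epsilon>)}"
    by (simp add: add.commute)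
  then show ?thesis
    by (rule Henstock_Kurzweil_Integration.integrable_reflect_real[THEN iffD1])
qed

lemma integrable_on_neighbourhood_if_both_sides:
  fixes F :: "real \<Rightarrow> real"
  assumes "\<exists>\<epsilon>>0. F integrable_on {e-\<epsilon>..e}" "\<exists>\<epsilon>>0. F integrable_on {e..e+\<epsilon>}"
  shows "\<exists>\<delta>>0. F integrable_on {e-\<delta>..e+\<delta>}"
proof -
  obtain \<epsilon>\<^sub>1 \<epsilon>\<^sub>2 where \<epsilon>: "0 < \<epsilon>\<^sub>1" "0 < \<epsilon>\<^sub>2"
    and F: "F integrable_on {e-\<epsilon>\<^sub>1..e}" "F integrable_on {e..e+\<epsilon>\<^sub>2}"
    using assms by blast
  define \<delta> where "\<delta> = min \<epsilon>\<^sub>1 \<epsilon>\<^sub>2"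
  have \<delta>: "0 < \<delta>" "\<delta> \<le> \<epsilon>\<^sub>1" "\<delta> \<le> \<epsilon>\<^sub>2" using \<epsilon> unfolding \<delta>_def by auto
  have "F integrable_on {e-\<delta>..e}" by (rule integrable_on_subinterval[OF F(1)]) (use \<delta> in auto)
  moreover have "F integrable_on {e..e+\<delta>}" by (rule integrable_on_subinterval[OF F(2)]) (use \<delta> in auto)
  ultimately have "F integrable_on {e-\<delta>..e+\<delta>}"
    by (rule Henstock_Kurzweil_Integration.integrable_combine[rotated 2]) (use \<delta> in auto)
  then show ?thesis using \<delta>(1) by blast
qed

lemma integrable_on_Icc_if_locally_integrable:
  fixes F :: "real \<Rightarrow> real"
  assumes "\<And>x. x \<in> {a..b} \<Longrightarrow> \<exists>\<delta>>0. F integrable_on {x-\<delta>..x+\<delta>}"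
  shows "F integrable_on {a..b}"
  unfolding cbox_interval[symmetric]
proof (rule integrable_on_little_subintervals, rule ballI)
  fix x assume "x \<in> cbox a b"
  then obtain \<delta> where "0 < \<delta>" and F: "F integrable_on cbox (x-\<delta>) (x+\<delta>)"
    using assms by (auto simp: cbox_interval)
  have "ball x \<delta> \<subseteq> cbox (x-\<delta>) (x+\<delta>)" by (auto simp: dist_real_def)
  then have "F integrable_on cbox u v" if "cbox u v \<subseteq> ball x \<delta>" for u v
    using that integrable_on_subcbox[OF F, of u v] by (meson order_trans)
  with \<open>0 < \<delta>\<close> show "\<exists>d>0. \<forall>u v. x \<in> cbox u v \<and> cbox u v \<subseteq> ball x d \<and> cbox u v \<subseteq> cbox a b
      \<longrightarrow> F integrable_on cbox u v"
    by (intro exI[of _ \<delta>]) simp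
qed

lemma eventually_at_right_imp_Ioc:
  fixes e :: real
  assumes "eventually P (at_right e)"
  obtains \<epsilon> where "0 < \<epsilon>" "\<epsilon> \<le> 1" "\<And>x. x \<in> {e<..e+\<epsilon>} \<Longrightarrow> P x"
proof -
  obtain b where b: "e < b" "\<And>y. e < y \<Longrightarrow> y < b \<Longrightarrow> P y"
    using assms by (auto simp: eventually_at_right_field)
  show ?thesis
  proof (rule that[of "min 1 ((b - e)/2)"])
    fix x assume "x \<in> {e<..e + min 1 ((b - e)/2)}"
    then show "P x" using b min.cobounded2[of 1 "(b - e)/2"] by (intro b(2)) auto
  qed (use b in auto)
qed

lemma eventually_at_left_imp_Ico:
  fixes e :: real
  assumes "eventually P (at_left e)"
  obtains \<epsilon> where "0 < \<epsilon>" "\<epsilon> \<le> 1" "\<And>x. x \<in> {e-\<epsilon>..<e} \<Longrightarrow> P x"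
proof -
  obtain b where b: "b < e" "\<And>y. b < y \<Longrightarrow> y < e \<Longrightarrow> P y"
    using assms by (auto simp: eventually_at_left_field)
  show ?thesis
  proof (rule that[of "min 1 ((e - b)/2)"])
    fix x assume "x \<in> {e - min 1 ((e - b)/2)..<e}"
    then show "P x" using b min.cobounded2[of 1 "(e - b)/2"] by (intro b(2)) auto
  qed (use b in auto)
qed

lemma eventually_at_not_in_finite:
  fixes e :: "'a::t1_space"
  assumes "finite E"
  shows "\<forall>\<^sub>F x in at e. x \<notin> E"
proof -
  have "open (- (E - {e}))" using assms by (intro open_Compl finite_imp_closed) simp
  then have "\<forall>\<^sub>F x in nhds e. x \<in> - (E - {e})" by (rule eventually_nhds_in_open) simp
  then show ?thesis unfolding eventually_at_filter by (auto elim: eventually_mono)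
qed

lemma eventually_at_left_avoiding_finite:
  fixes e b :: real
  assumes "finite E" "b < e"
  shows "\<forall>\<^sub>F u in at_left e. u \<in> {b<..<e} - E"
  using eventually_at_left_real[OF assms(2)] eventually_at_not_in_finite[OF assms(1), of e]
  unfolding eventually_at_split by (auto elim: eventually_elim2)

lemma eventually_at_right_avoiding_finite:
  fixes e b :: real
  assumes "finite E" "e < b"
  shows "\<forall>\<^sub>F u in at_right e. u \<in> {e<..<b} - E"
  using eventually_at_right_real[OF assms(2)] eventually_at_not_in_finite[OF assms(1), of e]
  unfolding eventually_at_split by (auto elim: eventually_elim2)

lemma eventually_at_imp_punctured_Icc:
  fixes e :: real
  assumes "\<forall>\<^sub>F u in at e. P u"
  obtains \<delta> where "0 < \<delta>" "\<And>u. u \<in> {e-\<delta>..e+\<delta>} \<Longrightarrow> u \<noteq> e \<Longrightarrow> P u"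
proof -
  obtain d where "0 < d" "\<And>u. u \<noteq> e \<Longrightarrow> dist u e < d \<Longrightarrow> P u"
    using assms unfolding eventually_at by auto
  then show ?thesis by (intro that[of "d/2"]) (auto simp: dist_real_def)
qed

lemma abs_bound_if_continuous_on_Icc:
  fixes F :: "real \<Rightarrow> real"
  assumes "continuous_on {a..b} F"
  obtains B where "\<And>x. x \<in> {a..b} \<Longrightarrow> \<bar>F x\<bar> \<le> B"
  using compact_imp_bounded[OF compact_continuous_image[OF assms compact_Icc]]
  unfolding bounded_iff by (metis image_eqI real_norm_def that)

lemma isCont_if_continuous_on_Icc:
  fixes F :: "real \<Rightarrow> real"
  shows "continuous_on {a..b} F \<Longrightarrow> u \<in> {a<..<b} \<Longrightarrow> isCont F u"
  using continuous_on_interior[of "{a..b}" F u] by simp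

lemma Icc_neighbourhood_in_open:
  fixes x :: real
  assumes "open S" "x \<in> S"
  obtains \<delta> where "0 < \<delta>" "{x-\<delta>..x+\<delta>} \<subseteq> S"
  using assms by (metis open_contains_cball cball_eq_atLeastAtMost)

lemma ex_less_if_ne_Inf:
  fixes Z :: "real set"
  assumes "x \<in> Z" "x \<noteq> Inf Z"
  shows "\<exists>y\<in>Z. y < x"
proof (cases "bdd_below Z")
  case True
  then have "Inf Z < x" using assms cInf_lower[of x Z] by simp
  then show ?thesis using cInf_lessD[of Z x] assms(1) by blast
qed (meson bdd_below_def not_le)

lemma ex_greater_if_ne_Sup:
  fixes Z :: "real set"
  assumes "x \<in> Z" "x \<noteq> Sup Z"
  shows "\<exists>y\<in>Z. x < y"
proof (cases "bdd_above Z")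
  case True
  then have "x < Sup Z" using assms cSup_upper[of x Z] by simp
  then show ?thesis using less_cSupD[of Z x] assms(1) by blast
qed (meson bdd_above_def not_le)

section \<open>Integrability of \<open>D/z\<close> near a zero of \<open>z\<close>\<close>

lemma D_div_z_integrable_if_g_bounded_away:
  fixes z h D g :: "real \<Rightarrow> real"
  assumes ab: "a \<le> b"
    and cont: "continuous_on {a..b} z" "continuous_on {a..b} h" "continuous_on {a..b} D"
    and ode: "\<And>x. x \<in> {a<..<b} \<Longrightarrow> (z has_real_derivative h x - c - D x * g x / z x) (at x)"
    and sign: "\<And>x. x \<in> {a<..<b} \<Longrightarrow> z x \<noteq> 0 \<and> D x / z x \<le> 0"
    and gmin: "0 < gmin" and \<sigma>: "\<And>x. x \<in> {a<..<b} \<Longrightarrow> gmin \<le> \<sigma> * g x"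
  shows "(\<lambda>x. D x / z x) integrable_on {a..b}"
proof -
  define z' where "z' x = h x - c - D x * g x / z x" for x
  have z'_int: "(z' has_integral z b - z a) {a..b}"
    using fundamental_theorem_of_calculus_interior[OF ab cont(1)] ode
    unfolding z'_def by (simp add: has_real_derivative_iff_has_vector_derivative)
  have "continuous_on {a<..<b} (\<lambda>x. D x / z x)"
    using sign by (intro continuous_on_divide continuous_on_subset[OF cont(1)]
        continuous_on_subset[OF cont(3)]) auto
  moreover have "(\<lambda>x. \<sigma> * (z' x - h x + c) / gmin) integrable_on {a..b}"
    using z'_int integrable_continuous_interval[OF cont(2)]
    by (intro integrable_on_divide integrable_on_mult_right integrable_add integrable_diff
        integrable_const_ivl) blast+
  moreover have "\<bar>D x / z x\<bar> \<le> \<sigma> * (z' x - h x + c) / gmin" if x: "x \<in> {a<..<b}" for x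
  proof -
    have "- (D x / z x) * gmin \<le> - (D x / z x) * (\<sigma> * g x)"
      using sign[OF x] \<sigma>[OF x] by (intro mult_left_mono) auto
    also have "\<dots> = \<sigma> * (z' x - h x + c)"
      using sign[OF x] by (simp add: z'_def field_simps)
    finally have "- (D x / z x) \<le> \<sigma> * (z' x - h x + c) / gmin"
      using gmin by (simp add: pos_le_divide_eq)
    moreover have "\<bar>D x / z x\<bar> = - (D x / z x)" using sign[OF x] by (intro abs_of_nonpos) blast
    ultimately show ?thesis by simp
  qed
  ultimately show ?thesis by (rule integrable_on_Icc_if_dominated)
qed

lemma has_real_derivative_neg_D_div_z:
  fixes z h D D' g :: "real \<Rightarrow> real"
  assumes z: "(z has_real_derivative h x - c - D x * g x / z x) (at x)"
    and D: "(D has_real_derivative D' x) (at x)" and "z x \<noteq> 0"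
  shows "((\<lambda>y. - (D y / z y)) has_real_derivative
           - (D' x + (- (D x / z x)) * (h x - c) + (- (D x / z x))\<^sup>2 * g x) / z x) (at x)"
  using DERIV_minus[OF DERIV_divide[OF D z \<open>z x \<noteq> 0\<close>]] \<open>z x \<noteq> 0\<close>
  by (simp add: field_simps power2_eq_square)

lemma neg_D_div_z_decreasing_where_large:
  fixes z h D D' g :: "real \<Rightarrow> real"
  assumes z: "(z has_real_derivative h x - c - D x * g x / z x) (at x)"
    and D: "(D has_real_derivative D' x) (at x)"
    and same_sign: "0 < z x * g x" and K: "\<bar>D' x\<bar> \<le> K" and M: "\<bar>h x - c\<bar> \<le> M"
    and large: "1 < - (D x / z x)" "K + M + 1 < - (D x / z x) * \<bar>g x\<bar>"
  shows "\<exists>d. ((\<lambda>y. - (D y / z y)) has_real_derivative d) (at x) \<and> d < 0"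
proof -
  define r where "r = - (D x / z x)"
  define Q where "Q = D' x + r * (h x - c) + r\<^sup>2 * g x"
  have "z x \<noteq> 0" using same_sign by auto
  have r: "1 < r" "K + M + 1 < r * \<bar>g x\<bar>" using large unfolding r_def .
  then have "r * (K + M + 1) < r * (r * \<bar>g x\<bar>)" by (intro mult_strict_left_mono) auto
  moreover have "K \<le> r * K" "- (r * M) \<le> r * (h x - c)" "r * (h x - c) \<le> r * M"
    using r(1) K M mult_left_mono[of "- M" "h x - c" r] mult_left_mono[of "h x - c" M r]
    by (auto simp: mult_le_cancel_right1 abs_le_iff)
  moreover have "r\<^sup>2 * \<bar>g x\<bar> = r * (r * \<bar>g x\<bar>)" by (simp add: power2_eq_square)
  ultimately have "0 < z x \<Longrightarrow> 0 < Q" "z x < 0 \<Longrightarrow> Q < 0"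
    using K r(1) same_sign unfolding Q_def
    by (auto simp: zero_less_mult_iff abs_le_iff abs_of_pos abs_of_neg algebra_simps)
  then have "- Q / z x < 0"
    using \<open>z x \<noteq> 0\<close> by (cases "0 < z x") (auto simp: divide_pos_pos divide_neg_neg)
  then show ?thesis
    using has_real_derivative_neg_D_div_z[where z=z and h=h and c=c and D=D and g=g and D'=D'
        and x=x, OF z D \<open>z x \<noteq> 0\<close>]
    unfolding Q_def r_def by blast
qed

lemma neg_D_div_z_ge_right_endpoint_if_large:
  fixes z h D D' g :: "real \<Rightarrow> real"
  assumes G: "0 < G" and H: "\<And>x. x \<in> {a..s} \<Longrightarrow>
        (z has_real_derivative h x - c - D x * g x / z x) (at x) \<and> (D has_real_derivative D' x) (at x)
        \<and> 0 < z x * g x \<and> \<bar>D' x\<bar> \<le> K \<and> \<bar>h x - c\<bar> \<le> M \<and> G \<le> \<bar>g x\<bar>"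
    and large: "1 < - (D s / z s)" "K + M + 1 < - (D s / z s) * G"
    and x: "x \<in> {a..s}"
  shows "- (D s / z s) \<le> - (D x / z x)"
proof (rule ge_right_endpoint_if_decreasing_above[where F="\<lambda>x. - (D x / z x)" and a=a and b=s
      and T="max 1 ((K + M + 1) / G)"])
  show "continuous_on {a..s} (\<lambda>x. - (D x / z x))"
  proof (intro continuous_at_imp_continuous_on ballI)
    fix x assume "x \<in> {a..s}"
    then have "isCont D x" "isCont z x" "z x \<noteq> 0" using H[of x] by (auto dest: DERIV_isCont)
    then show "isCont (\<lambda>x. - (D x / z x)) x" by (intro continuous_minus isCont_divide)
  qed
  show "max 1 ((K + M + 1) / G) < - (D s / z s)"
    using large by (simp only: max_less_iff_conj pos_divide_less_eq[OF G])
  fix y assume y: "y \<in> {a<..s}" and "max 1 ((K + M + 1) / G) < - (D y / z y)"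
  then have "1 < - (D y / z y)" "K + M + 1 < - (D y / z y) * G"
    by (simp_all only: max_less_iff_conj pos_divide_less_eq[OF G])
  moreover have "- (D y / z y) * G \<le> - (D y / z y) * \<bar>g y\<bar>"
    using H[of y] y \<open>1 < - (D y / z y)\<close> by (intro mult_left_mono) auto
  ultimately show "\<exists>d. ((\<lambda>x. - (D x / z x)) has_real_derivative d) (at y) \<and> d < 0"
    using H[of y] y by (intro neg_D_div_z_decreasing_where_large) auto
qed (use x in auto)

lemma neg_D_div_z_bound_left_of_degenerate_point:
  fixes z h D D' g :: "real \<Rightarrow> real"
  assumes \<tau>: "0 \<le> \<tau>" and L: "0 < L" and K: "0 \<le> K" and M: "0 \<le> M" and s: "a \<le> s" "s < e"
    and H: "\<And>x. x \<in> {a..s} \<Longrightarrow> (z has_real_derivative h x - c - D x * g x / z x) (at x)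
        \<and> z x < 0 \<and> (D has_real_derivative D' x) (at x) \<and> \<bar>D' x\<bar> \<le> K
        \<and> \<bar>h x - c\<bar> \<le> M \<and> L * (e - x) powr \<tau> \<le> - g x"
  shows "- (D s / z s) \<le> max 1 (- (D a / z a)) + (K + M + 1) / L * (e - s) powr (- \<tau>)"
proof -
  define G where "G = L * (e - s) powr \<tau>"
  have "0 < G" using L s unfolding G_def by simp
  have "(K + M + 1) / G = (K + M + 1) / L * (e - s) powr (- \<tau>)"
    unfolding G_def by (simp add: powr_minus divide_inverse)
  moreover have "0 \<le> (K + M + 1) / L * (e - s) powr (- \<tau>)" using K M L by simp
  moreover have "- (D s / z s) \<le> max (- (D a / z a)) (max 1 ((K + M + 1) / G))"
  proof (rule ccontr)
    assume "\<not> ?thesis"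
    then have large: "- (D a / z a) < - (D s / z s)" "1 < - (D s / z s)"
      "(K + M + 1) / G < - (D s / z s)" by auto
    then have "K + M + 1 < - (D s / z s) * G" by (simp only: pos_divide_less_eq[OF \<open>0 < G\<close>])
    have "G \<le> \<bar>g x\<bar>" "0 < z x * g x" if "x \<in> {a..s}" for x
    proof -
      have "(e - s) powr \<tau> \<le> (e - x) powr \<tau>" using that s \<tau> by (intro powr_mono2) auto
      then have "G \<le> L * (e - x) powr \<tau>" unfolding G_def using L by simp
      moreover have "L * (e - x) powr \<tau> \<le> - g x" "z x < 0" using H[of x] that by auto
      ultimately show "G \<le> \<bar>g x\<bar>" "0 < z x * g x" using \<open>0 < G\<close> by (auto simp: zero_less_mult_iff)
    qed
    then have "- (D s / z s) \<le> - (D a / z a)"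
      using H s \<open>0 < G\<close> large(2) \<open>K + M + 1 < - (D s / z s) * G\<close>
      by (intro neg_D_div_z_ge_right_endpoint_if_large[where h=h and c=c]) auto
    with large(1) show False by simp
  qed
  ultimately show ?thesis by linarith
qed

lemma D_div_z_integrable_left_of_degenerate_point:
  fixes z h D D' g :: "real \<Rightarrow> real"
  assumes \<tau>: "0 < \<tau>" "\<tau> < 1" and L: "0 < L" and K: "0 \<le> K" and M: "0 \<le> M"
    and near: "\<forall>\<^sub>F x in at_left e. (z has_real_derivative h x - c - D x * g x / z x) (at x)
        \<and> z x < 0 \<and> 0 < D x \<and> (D has_real_derivative D' x) (at x) \<and> \<bar>D' x\<bar> \<le> K
        \<and> \<bar>h x - c\<bar> \<le> M \<and> L * (e - x) powr \<tau> \<le> - g x"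
  shows "\<exists>\<epsilon>>0. (\<lambda>x. D x / z x) integrable_on {e-\<epsilon>..e}"
proof -
  obtain \<epsilon> where \<epsilon>: "0 < \<epsilon>" and H: "\<And>x. x \<in> {e-\<epsilon>..<e} \<Longrightarrow>
      (z has_real_derivative h x - c - D x * g x / z x) (at x)
        \<and> z x < 0 \<and> 0 < D x \<and> (D has_real_derivative D' x) (at x) \<and> \<bar>D' x\<bar> \<le> K
        \<and> \<bar>h x - c\<bar> \<le> M \<and> L * (e - x) powr \<tau> \<le> - g x"
    using eventually_at_left_imp_Ico[OF near] by blast
  define B where "B = max 1 (- (D (e-\<epsilon>) / z (e-\<epsilon>)))"
  have "(\<lambda>x. D x / z x) integrable_on {e-\<epsilon>..e}"
  proof (rule integrable_on_Icc_if_dominated)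
    show "continuous_on {e-\<epsilon><..<e} (\<lambda>x. D x / z x)"
    proof (intro continuous_at_imp_continuous_on ballI)
      fix x assume "x \<in> {e-\<epsilon><..<e}"
      then have "isCont D x" "isCont z x" "z x \<noteq> 0" using H[of x] by (auto dest: DERIV_isCont)
      then show "isCont (\<lambda>x. D x / z x) x" by (rule isCont_divide)
    qed
    show "(\<lambda>x. B + (K + M + 1) / L * (e - x) powr (- \<tau>)) integrable_on {e-\<epsilon>..e}"
      using integrable_on_powr_to_point[OF \<tau>(2), of \<epsilon> e] \<epsilon>
      by (intro integrable_add integrable_const_ivl integrable_on_mult_right) auto
    fix x assume x: "x \<in> {e-\<epsilon><..<e}"
    then have "\<bar>D x / z x\<bar> = - (D x / z x)" using H[of x] by (simp add: divide_pos_neg)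
    also have "\<dots> \<le> B + (K + M + 1) / L * (e - x) powr (- \<tau>)"
      unfolding B_def using x \<tau>(1) L K M H
      by (intro neg_D_div_z_bound_left_of_degenerate_point[where h=h and c=c and g=g and D'=D']) auto
    finally show "\<bar>D x / z x\<bar> \<le> B + (K + M + 1) / L * (e - x) powr (- \<tau>)" .
  qed
  then show ?thesis using \<epsilon> by blast
qed

(* If r = -D/z were large at s, it would stay large on [(e + s)/2, s], making z' > 2K + 1
   there; then z s > K (s - e) \<ge> -D s = r s * z s, because D e = 0, contradicting r s > 1. *)
lemma neg_D_div_z_bound_right_of_degenerate_point:
  fixes z h D D' g :: "real \<Rightarrow> real"
  assumes \<tau>: "0 \<le> \<tau>" and L: "0 < L" and K: "0 \<le> K" and M: "0 \<le> M" and s: "e < s" and D_e: "D e = 0"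
    and HD: "\<And>x. x \<in> {e..s} \<Longrightarrow> (D has_real_derivative D' x) (at x) \<and> \<bar>D' x\<bar> \<le> K"
    and H: "\<And>x. x \<in> {e<..s} \<Longrightarrow> (z has_real_derivative h x - c - D x * g x / z x) (at x)
        \<and> 0 < z x \<and> \<bar>h x - c\<bar> \<le> M \<and> L * (x - e) powr \<tau> \<le> g x"
  shows "- (D s / z s) \<le> max 1 ((2 * K + M + 1) / (L * ((s - e) / 2) powr \<tau>))"
proof (rule ccontr)
  define m where "m = (e + s) / 2"
  have m: "e < m" "m < s" "s - m = (s - e) / 2" using s unfolding m_def by (auto simp: field_simps)
  define G where "G = L * ((s - e) / 2) powr \<tau>"
  have "0 < G" using L s unfolding G_def by simp
  have G_le_g: "G \<le> g x" if "x \<in> {m..s}" for x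
  proof -
    have "((s - e) / 2) powr \<tau> \<le> (x - e) powr \<tau>" using that \<tau> unfolding m_def by (intro powr_mono2) auto
    moreover have "L * (x - e) powr \<tau> \<le> g x" using H[of x] that m(1) by auto
    ultimately show ?thesis using L unfolding G_def by (smt (verit) mult_left_mono)
  qed
  assume "\<not> - (D s / z s) \<le> max 1 ((2 * K + M + 1) / (L * ((s - e) / 2) powr \<tau>))"
  then have "1 < - (D s / z s)" "(2 * K + M + 1) / G < - (D s / z s)" unfolding G_def by auto
  then have large: "1 < - (D s / z s)" "2 * K + M + 1 < - (D s / z s) * G"
    by (simp_all only: pos_divide_less_eq[OF \<open>0 < G\<close>])
  have r_ge: "- (D s / z s) \<le> - (D x / z x)" if "x \<in> {m..s}" for x
  proof (rule neg_D_div_z_ge_right_endpoint_if_large[where z=z and D=D and h=h and c=c and g=g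
        and D'=D' and K=K and M=M and G=G and a=m and s=s])
    fix y assume "y \<in> {m..s}"
    then show "(z has_real_derivative h y - c - D y * g y / z y) (at y)
        \<and> (D has_real_derivative D' y) (at y) \<and> 0 < z y * g y \<and> \<bar>D' y\<bar> \<le> K \<and> \<bar>h y - c\<bar> \<le> M \<and> G \<le> \<bar>g y\<bar>"
      using H[of y] HD[of y] G_le_g[of y] \<open>0 < G\<close> m(1) by auto
  qed (use \<open>0 < G\<close> large that K in auto)
  obtain \<xi> where \<xi>: "m < \<xi>" "\<xi> < s"
    and z_mvt: "z s - z m = (s - m) * (h \<xi> - c - D \<xi> * g \<xi> / z \<xi>)"
    using MVT2[OF m(2), of z "\<lambda>x. h x - c - D x * g x / z x"] H m(1) by force
  have "- (D s / z s) * G \<le> - (D \<xi> / z \<xi>) * g \<xi>"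
    using r_ge[of \<xi>] G_le_g[of \<xi>] \<xi> large(1) \<open>0 < G\<close> by (intro mult_mono) auto
  moreover have "- M \<le> h \<xi> - c" using H[of \<xi>] \<xi> m(1) by auto
  ultimately have "2 * K + 1 < h \<xi> - c - D \<xi> * g \<xi> / z \<xi>" using large(2) by simp
  have "0 < z m" using H[of m] m by auto
  have "K * (s - e) < K * (s - e) + (s - e) / 2" using s by simp
  also have "\<dots> = (s - m) * (2 * K + 1)" unfolding m(3) by (simp add: field_simps)
  also have "\<dots> < (s - m) * (h \<xi> - c - D \<xi> * g \<xi> / z \<xi>)"
    using m(2) \<open>2 * K + 1 < h \<xi> - c - D \<xi> * g \<xi> / z \<xi>\<close> by (intro mult_strict_left_mono) auto
  also have "\<dots> < z s" using z_mvt \<open>0 < z m\<close> by simp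
  finally have z_s: "K * (s - e) < z s" .
  obtain \<eta> where \<eta>: "e < \<eta>" "\<eta> < s" and D_mvt: "D s - D e = (s - e) * D' \<eta>"
    using MVT2[OF s, of D D'] HD by force
  have "- D' \<eta> * (s - e) \<le> K * (s - e)" using HD[of \<eta>] \<eta> s by (intro mult_right_mono) auto
  then have "- D s \<le> K * (s - e)" using D_mvt D_e by (simp add: mult.commute)
  moreover have "z s < - D s"
  proof -
    have "0 < z s" using H[of s] s by auto
    then have "1 * z s < - (D s / z s) * z s" by (rule mult_strict_right_mono[OF large(1)])
    then show ?thesis using \<open>0 < z s\<close> by simp
  qed
  ultimately show False using z_s by linarith
qed

lemma D_div_z_integrable_right_of_degenerate_point:
  fixes z h D D' g :: "real \<Rightarrow> real"
  assumes \<tau>: "0 < \<tau>" "\<tau> < 1" and L: "0 < L" and K: "0 \<le> K" and M: "0 \<le> M" and D_e: "D e = 0"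
    and D_near: "\<forall>\<^sub>F x in nhds e. (D has_real_derivative D' x) (at x) \<and> \<bar>D' x\<bar> \<le> K"
    and near: "\<forall>\<^sub>F x in at_right e. (z has_real_derivative h x - c - D x * g x / z x) (at x)
        \<and> 0 < z x \<and> D x < 0 \<and> \<bar>h x - c\<bar> \<le> M \<and> L * (x - e) powr \<tau> \<le> g x"
  shows "\<exists>\<epsilon>>0. (\<lambda>x. D x / z x) integrable_on {e..e+\<epsilon>}"
proof -
  have D_e': "(D has_real_derivative D' e) (at e) \<and> \<bar>D' e\<bar> \<le> K"
    using D_near by (rule eventually_nhds_x_imp_x)
  obtain \<epsilon> where \<epsilon>: "0 < \<epsilon>" and H: "\<And>x. x \<in> {e<..e+\<epsilon>} \<Longrightarrow>
      ((z has_real_derivative h x - c - D x * g x / z x) (at x)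
        \<and> 0 < z x \<and> D x < 0 \<and> \<bar>h x - c\<bar> \<le> M \<and> L * (x - e) powr \<tau> \<le> g x)
      \<and> (D has_real_derivative D' x) (at x) \<and> \<bar>D' x\<bar> \<le> K"
    using eventually_at_right_imp_Ioc[OF
        eventually_conj[OF near filter_leD[OF at_within_le_nhds D_near]]]
    by blast
  define C where "C = (2 * K + M + 1) * 2 powr \<tau> / L"
  have "(\<lambda>x. D x / z x) integrable_on {e..e+\<epsilon>}"
  proof (rule integrable_on_Icc_if_dominated)
    show "continuous_on {e<..<e+\<epsilon>} (\<lambda>x. D x / z x)"
    proof (intro continuous_at_imp_continuous_on ballI)
      fix x assume "x \<in> {e<..<e+\<epsilon>}"
      then have "isCont D x" "isCont z x" "z x \<noteq> 0" using H[of x] by (auto dest: DERIV_isCont)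
      then show "isCont (\<lambda>x. D x / z x) x" by (rule isCont_divide)
    qed
    show "(\<lambda>x. 1 + C * (x - e) powr (- \<tau>)) integrable_on {e..e+\<epsilon>}"
      using integrable_on_powr_from_point[OF \<tau>(2), of \<epsilon> e] \<epsilon>
      by (intro integrable_add integrable_const_ivl integrable_on_mult_right) auto
    fix x assume x: "x \<in> {e<..<e+\<epsilon>}"
    have "(2 * K + M + 1) / (L * ((x - e) / 2) powr \<tau>) = C * (x - e) powr (- \<tau>)"
    proof -
      have "((x - e) / 2) powr \<tau> = (x - e) powr \<tau> / 2 powr \<tau>" using x by (intro powr_divide)
      moreover have "0 < (x - e) powr \<tau>" using x by simp
      ultimately show ?thesis using L unfolding C_def powr_minus by (simp add: field_simps)
    qed
    moreover have "0 \<le> C * (x - e) powr (- \<tau>)" using K M L unfolding C_def by simp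
    moreover have HD: "(D has_real_derivative D' y) (at y) \<and> \<bar>D' y\<bar> \<le> K" if "y \<in> {e..x}" for y
      using H[of y] D_e' that x by (cases "y = e") auto
    ultimately have "- (D x / z x) \<le> 1 + C * (x - e) powr (- \<tau>)"
      using neg_D_div_z_bound_right_of_degenerate_point[where s=x and D=D and e=e and D'=D'
          and z=z and h=h and c=c and g=g, OF less_imp_le[OF \<tau>(1)] L K M _ D_e] x H
      by fastforce
    moreover have "D x / z x < 0" using H[of x] x by (simp add: divide_neg_pos)
    ultimately show "\<bar>D x / z x\<bar> \<le> 1 + C * (x - e) powr (- \<tau>)" by simp
  qed
  then show ?thesis using \<epsilon> by blast
qed

(* The exponent q = (1 + \<tau>)/2 < 1 satisfies q - 1 = \<tau> - q, so the derivative of the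
   comparison function \<beta> (x - e)^q and the lower bound D g / z \<ge> d L (x - e)^\<tau> / z
   scale alike. *)
lemma comparison_decreasing_right_of_zero:
  fixes z h D g :: "real \<Rightarrow> real"
  assumes \<tau>: "0 < \<tau>" "\<tau> < 1" and L: "0 < L" and d: "0 < d" and M: "0 \<le> M"
    and \<beta>: "0 < \<beta>" "\<beta> \<le> 1" "(M + 2) * \<beta> \<le> d * L" and x: "e < x" "x \<le> e + 1"
    and z: "(z has_real_derivative h x - c - D x * g x / z x) (at x)"
      "0 < z x" "z x < \<beta> * (x - e) powr ((1 + \<tau>) / 2)"
    and H: "D x \<le> - d" "\<bar>h x - c\<bar> \<le> M" "L * (x - e) powr \<tau> \<le> g x"
  shows "\<exists>d'. ((\<lambda>x. \<beta> * (x - e) powr ((1 + \<tau>) / 2) - z x) has_real_derivative d') (at x) \<and> d' < 0"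
proof -
  define q where "q = (1 + \<tau>) / 2"
  define t where "t = x - e"
  have t: "0 < t" "t \<le> 1" using x unfolding t_def by auto
  have q: "0 < q" "q < 1" "q - 1 = \<tau> - q" using \<tau> unfolding q_def by (auto simp: field_simps)
  have "((\<lambda>x. (x - e) powr q) has_real_derivative q * t powr (q - 1)) (at x)"
    using DERIV_fun_powr[OF DERIV_diff[OF DERIV_ident DERIV_const], of x e q] t
    unfolding t_def by simp
  then have deriv: "((\<lambda>x. \<beta> * (x - e) powr q - z x) has_real_derivative
      \<beta> * (q * t powr (q - 1)) - (h x - c - D x * g x / z x)) (at x)"
    by (intro DERIV_diff DERIV_cmult z(1))
  define p where "p = t powr (q - 1)"
  have p: "1 \<le> p" using powr_mono'[of "q - 1" 0 t] q(2) t unfolding p_def by simp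
  have "d * (L * t powr \<tau>) \<le> - D x * g x"
    using H d L t unfolding t_def by (intro mult_mono) auto
  have "d * L / \<beta> * p = d * (L * t powr \<tau>) / (\<beta> * t powr q)"
    unfolding p_def q(3) powr_diff using \<beta> t by simp
  also have "\<dots> \<le> - D x * g x / (\<beta> * t powr q)"
    using \<open>d * (L * t powr \<tau>) \<le> - D x * g x\<close> \<beta> t by (intro divide_right_mono) auto
  also have "\<dots> < - D x * g x / z x"
  proof (rule divide_strict_left_mono)
    show "z x < \<beta> * t powr q" using z(3) unfolding t_def q_def .
    have "0 < d * (L * t powr \<tau>)" using d L t by simp
    then show "0 < - D x * g x" using \<open>d * (L * t powr \<tau>) \<le> - D x * g x\<close> by linarith
    show "0 < \<beta> * t powr q * z x" using \<beta> t z(2) by simp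
  qed
  finally have "d * L / \<beta> * p < - D x * g x / z x" .
  moreover have "M + 2 \<le> d * L / \<beta>" using \<beta> by (simp add: pos_le_divide_eq)
  then have "(M + 2) * p \<le> d * L / \<beta> * p" using p by (intro mult_right_mono) auto
  moreover have "\<beta> * q * p \<le> p" using \<beta> q(1,2) p by (intro mult_left_le_one_le mult_le_one) auto
  moreover have "M \<le> M * p" using mult_left_mono[OF p M] by simp
  ultimately have "\<beta> * (q * t powr (q - 1)) - (h x - c - D x * g x / z x) < 0"
    using H(2) p unfolding p_def by (simp add: algebra_simps abs_le_iff)
  then show ?thesis using deriv unfolding q_def by blast
qed

lemma z_lower_bound_right_of_zero:
  fixes z h D g :: "real \<Rightarrow> real"
  assumes \<tau>: "0 < \<tau>" "\<tau> < 1" and L: "0 < L" and d: "0 < d" and M: "0 \<le> M"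
    and \<beta>: "0 < \<beta>" "\<beta> \<le> 1" "(M + 2) * \<beta> \<le> d * L" and s: "e < s" "s \<le> e + 1"
    and z_e: "isCont z e" "z e = 0"
    and H: "\<And>x. x \<in> {e<..s} \<Longrightarrow> (z has_real_derivative h x - c - D x * g x / z x) (at x)
        \<and> 0 < z x \<and> D x \<le> - d \<and> \<bar>h x - c\<bar> \<le> M \<and> L * (x - e) powr \<tau> \<le> g x"
  shows "\<beta> * (s - e) powr ((1 + \<tau>) / 2) \<le> z s"
proof (rule ccontr)
  define F where "F x = \<beta> * (x - e) powr ((1 + \<tau>) / 2) - z x" for x
  assume "\<not> \<beta> * (s - e) powr ((1 + \<tau>) / 2) \<le> z s"
  then have "0 < F s" unfolding F_def by simp
  moreover have "F s \<le> F e"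
  proof (rule ge_right_endpoint_if_decreasing_above[of e s F 0])
    have "continuous_on {e..s} z"
    proof (intro continuous_at_imp_continuous_on ballI)
      fix x assume "x \<in> {e..s}"
      then show "isCont z x" using z_e(1) H[of x] by (cases "x = e") (auto intro: DERIV_isCont)
    qed
    then show "continuous_on {e..s} F"
      unfolding F_def using \<tau> by (intro continuous_intros continuous_on_powr') auto
    fix x assume "x \<in> {e<..s}" "0 < F x"
    then show "\<exists>d'. (F has_real_derivative d') (at x) \<and> d' < 0"
      using H[of x] s unfolding F_def[abs_def]
      by (intro comparison_decreasing_right_of_zero[OF \<tau> L d M \<beta>]) auto
  qed (use s \<open>0 < F s\<close> in auto)
  moreover have "F e = 0" using z_e \<tau> unfolding F_def by simp
  ultimately show False by simp
qed

lemma D_div_z_integrable_right_of_zero: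
  fixes z h D g :: "real \<Rightarrow> real"
  assumes \<tau>: "0 < \<tau>" "\<tau> < 1" and L: "0 < L" and d: "0 < d" and M: "0 \<le> M"
    and z_e: "isCont z e" "z e = 0"
    and near: "\<forall>\<^sub>F x in at_right e. (z has_real_derivative h x - c - D x * g x / z x) (at x)
        \<and> 0 < z x \<and> isCont D x \<and> D x \<le> - d \<and> \<bar>D x\<bar> \<le> Dm \<and> \<bar>h x - c\<bar> \<le> M
        \<and> L * (x - e) powr \<tau> \<le> g x"
  shows "\<exists>\<epsilon>>0. (\<lambda>x. D x / z x) integrable_on {e..e+\<epsilon>}"
proof -
  obtain \<epsilon> where \<epsilon>: "0 < \<epsilon>" "\<epsilon> \<le> 1" and H: "\<And>x. x \<in> {e<..e+\<epsilon>} \<Longrightarrow>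
      (z has_real_derivative h x - c - D x * g x / z x) (at x)
        \<and> 0 < z x \<and> isCont D x \<and> D x \<le> - d \<and> \<bar>D x\<bar> \<le> Dm \<and> \<bar>h x - c\<bar> \<le> M
        \<and> L * (x - e) powr \<tau> \<le> g x"
    using eventually_at_right_imp_Ioc[OF near] by blast
  define q where "q = (1 + \<tau>) / 2"
  have "q < 1" using \<tau> unfolding q_def by simp
  define \<beta> where "\<beta> = min 1 (d * L / (M + 2))"
  have "\<beta> \<le> d * L / (M + 2)" unfolding \<beta>_def by simp
  then have "(M + 2) * \<beta> \<le> d * L" using M by (simp add: pos_le_divide_eq mult.commute)
  moreover have "0 < \<beta>" "\<beta> \<le> 1" using d L M by (auto simp: \<beta>_def)
  ultimately have \<beta>: "0 < \<beta>" "\<beta> \<le> 1" "(M + 2) * \<beta> \<le> d * L" by auto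
  have "(\<lambda>x. D x / z x) integrable_on {e..e+\<epsilon>}"
  proof (rule integrable_on_Icc_if_dominated)
    show "continuous_on {e<..<e+\<epsilon>} (\<lambda>x. D x / z x)"
    proof (intro continuous_at_imp_continuous_on ballI)
      fix x assume "x \<in> {e<..<e+\<epsilon>}"
      then have "isCont D x" "isCont z x" "z x \<noteq> 0" using H[of x] by (auto dest: DERIV_isCont)
      then show "isCont (\<lambda>x. D x / z x) x" by (rule isCont_divide)
    qed
    show "(\<lambda>x. Dm / \<beta> * (x - e) powr (- q)) integrable_on {e..e+\<epsilon>}"
      using integrable_on_powr_from_point[OF \<open>q < 1\<close>, of \<epsilon> e] \<epsilon> by (intro integrable_on_mult_right) auto
    fix x assume x: "x \<in> {e<..<e+\<epsilon>}"
    have "\<beta> * (x - e) powr q \<le> z x"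
      unfolding q_def using x \<epsilon> H
      by (intro z_lower_bound_right_of_zero[OF \<tau> L d M \<beta> _ _ z_e, where h=h and c=c and g=g and D=D]) auto
    moreover have "0 < \<beta> * (x - e) powr q" using \<beta> x by simp
    moreover have "\<bar>D x\<bar> \<le> Dm" "0 < z x" using H[of x] x by auto
    ultimately have "\<bar>D x\<bar> / z x \<le> Dm / (\<beta> * (x - e) powr q)"
      by (meson frac_le abs_ge_zero order.trans)
    also have "\<dots> = Dm / \<beta> * (x - e) powr (- q)" by (simp add: powr_minus divide_inverse)
    finally show "\<bar>D x / z x\<bar> \<le> Dm / \<beta> * (x - e) powr (- q)"
      using \<open>0 < z x\<close> by (simp add: abs_div)
  qed
  then show ?thesis using \<epsilon> by blast
qed

(* Reflection x \<mapsto> -x: z(-x), D(-x), -g(-x), -h(-x) and -c satisfy the hypotheses of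
   the right-sided lemma at -e. *)
lemma D_div_z_integrable_left_of_zero:
  fixes z h D g :: "real \<Rightarrow> real"
  assumes \<tau>: "0 < \<tau>" "\<tau> < 1" and L: "0 < L" and d: "0 < d" and M: "0 \<le> M"
    and z_e: "isCont z e" "z e = 0"
    and near: "\<forall>\<^sub>F x in at_left e. (z has_real_derivative h x - c - D x * g x / z x) (at x)
        \<and> 0 < z x \<and> isCont D x \<and> D x \<le> - d \<and> \<bar>D x\<bar> \<le> Dm \<and> \<bar>h x - c\<bar> \<le> M
        \<and> L * (e - x) powr \<tau> \<le> - g x"
  shows "\<exists>\<epsilon>>0. (\<lambda>x. D x / z x) integrable_on {e-\<epsilon>..e}"
proof -
  have "\<forall>\<^sub>F y in at_right (- e).
      ((\<lambda>y. z (- y)) has_real_derivative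
          - h (- y) - - c - D (- y) * - g (- y) / z (- y)) (at y)
      \<and> 0 < z (- y) \<and> isCont (\<lambda>y. D (- y)) y \<and> D (- y) \<le> - d \<and> \<bar>D (- y)\<bar> \<le> Dm
      \<and> \<bar>- h (- y) - - c\<bar> \<le> M \<and> L * (y - - e) powr \<tau> \<le> - g (- y)"
    using near unfolding at_left_minus eventually_filtermap
  proof eventually_elim
    case (elim y)
    then have "((\<lambda>y. z (- y)) has_real_derivative - (h (- y) - c - D (- y) * g (- y) / z (- y))) (at y)"
      by (simp add: DERIV_mirror)
    moreover have "isCont (\<lambda>y. D (- y)) y"
      using elim continuous_at_compose[of y uminus D] by (simp add: o_def)
    moreover have "\<bar>- h (- y) - - c\<bar> = \<bar>h (- y) - c\<bar>" by linarith
    ultimately show ?case using elim by (simp add: algebra_simps)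
  qed
  moreover have "isCont (\<lambda>y. z (- y)) (- e)"
    using z_e(1) continuous_at_compose[of "- e" uminus z] by (simp add: o_def)
  ultimately obtain \<epsilon> where "0 < \<epsilon>" "(\<lambda>y. D (- y) / z (- y)) integrable_on {- e..- e + \<epsilon>}"
    using D_div_z_integrable_right_of_zero[OF \<tau> L d M, where z="\<lambda>y. z (- y)" and e="- e"
        and h="\<lambda>y. - h (- y)" and c="- c" and D="\<lambda>y. D (- y)" and g="\<lambda>y. - g (- y)"] z_e(2)
    by auto
  moreover have "{- e..- e + \<epsilon>} = {- e..- (e - \<epsilon>)}" by simp
  ultimately have "(\<lambda>x. D x / z x) integrable_on {e - \<epsilon>..e}"
    using Henstock_Kurzweil_Integration.integrable_reflect_real[of "\<lambda>x. D x / z x" e "e - \<epsilon>"]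
    by simp
  then show ?thesis using \<open>0 < \<epsilon>\<close> by blast
qed

section \<open>Weak derivatives against test functions\<close>

lemma test_funD:
  fixes \<psi> :: "real \<Rightarrow> real"
  assumes "test_fun \<psi>"
  shows "(\<psi> has_real_derivative deriv \<psi> x) (at x)"
    and "continuous_on UNIV \<psi>" and "continuous_on UNIV (deriv \<psi>)"
    and "\<exists>R>0. \<forall>x. R \<le> \<bar>x\<bar> \<longrightarrow> \<psi> x = 0 \<and> deriv \<psi> x = 0"
proof -
  have d0: "\<psi> differentiable (at x)" for x
    using assms unfolding test_fun_def by (metis funpow_0)
  have d1: "deriv \<psi> differentiable (at x)" for x
    using assms unfolding test_fun_def
    by (metis funpow_0 funpow_Suc_right o_apply One_nat_def funpow.simps(2))
  show deriv: "(\<psi> has_real_derivative deriv \<psi> x) (at x)" for x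
    using d0 DERIV_deriv_iff_real_differentiable by blast
  show "continuous_on UNIV \<psi>" "continuous_on UNIV (deriv \<psi>)"
    using d0 d1 by (auto intro: continuous_at_imp_continuous_on differentiable_imp_continuous_within)
  obtain B where B: "\<And>x. \<psi> x \<noteq> 0 \<Longrightarrow> \<bar>x\<bar> \<le> B"
    using assms unfolding test_fun_def bounded_iff by auto
  have vanish: "\<psi> y = 0" if "B < \<bar>y\<bar>" for y using B[of y] that by force
  show "\<exists>R>0. \<forall>x. R \<le> \<bar>x\<bar> \<longrightarrow> \<psi> x = 0 \<and> deriv \<psi> x = 0"
  proof (intro exI[of _ "max B 0 + 1"] conjI allI impI)
    fix x :: real assume x: "max B 0 + 1 \<le> \<bar>x\<bar>"
    then show "\<psi> x = 0" using vanish by auto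
    have "(\<psi> has_real_derivative 0) (at x)"
    proof (rule has_field_derivative_transform_within_open[OF DERIV_const, where S="{y. B < \<bar>y\<bar>}"])
      show "open {y. B < \<bar>y\<bar>}" by (intro open_Collect_less continuous_intros)
    qed (use x vanish in auto)
    then show "deriv \<psi> x = 0" using deriv[of x] DERIV_unique by blast
  qed simp
qed

lemma loc_int_continuous: "continuous_on UNIV u \<Longrightarrow> loc_int u"
  unfolding loc_int_def by (metis borel_integrable_atLeastAtMost' continuous_on_subset subset_UNIV)

lemma loc_int_mult_continuous:
  assumes u: "loc_int u" and v: "continuous_on UNIV v"
  shows "loc_int (\<lambda>x. u x * v x)"
  unfolding loc_int_def
proof (intro allI)
  fix a b :: real
  obtain B where B: "\<And>x. x \<in> {a..b} \<Longrightarrow> \<bar>v x\<bar> \<le> B"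
    using compact_imp_bounded[OF compact_continuous_image[OF continuous_on_subset[OF v] compact_Icc]]
    unfolding bounded_iff by fastforce
  have "set_integrable lborel {a..b} (\<lambda>x. B * u x)" using u unfolding loc_int_def by auto
  moreover have "(\<lambda>x. indicator {a..b} x *\<^sub>R u x) \<in> borel_measurable lborel"
    using u unfolding loc_int_def set_integrable_def by (blast intro: borel_measurable_integrable)
  then have "(\<lambda>x. indicator {a..b} x *\<^sub>R u x * v x) \<in> borel_measurable lborel"
    using borel_measurable_continuous_onI[OF v] by (intro borel_measurable_times) simp_all
  then have "set_borel_measurable lborel {a..b} (\<lambda>x. u x * v x)"
    unfolding set_borel_measurable_def by (simp add: mult.assoc)
  moreover have "AE x in lborel. x \<in> {a..b} \<longrightarrow> norm (u x * v x) \<le> norm (B * u x)"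
  proof (intro AE_I2 impI)
    fix x assume "x \<in> {a..b}"
    then have "\<bar>v x\<bar> \<le> \<bar>B\<bar>" using B by force
    then have "\<bar>u x\<bar> * \<bar>v x\<bar> \<le> \<bar>u x\<bar> * \<bar>B\<bar>" by (intro mult_left_mono) auto
    then show "norm (u x * v x) \<le> norm (B * u x)" by (simp add: abs_mult mult.commute)
  qed
  ultimately show "set_integrable lborel {a..b} (\<lambda>x. u x * v x)" by (rule set_integrable_bound)
qed

lemma loc_int_vanishing_outside:
  fixes F :: "real \<Rightarrow> real"
  assumes F: "loc_int F" and vanish: "\<And>x. R \<le> \<bar>x\<bar> \<Longrightarrow> F x = 0"
  shows "integrable lborel F" and "(LINT x|lborel. F x) = integral {-R..R} F"
proof -
  have eq: "(\<lambda>x. indicator {-R..R} x *\<^sub>R F x) = F"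
    using vanish by (force simp: indicator_def)
  have F_R: "set_integrable lborel {-R..R} F" using F unfolding loc_int_def by blast
  then show "integrable lborel F" unfolding set_integrable_def eq .
  have "(LINT x|lborel. F x) = (LINT x:{-R..R}|lborel. F x)"
    unfolding set_lebesgue_integral_def eq ..
  also have "\<dots> = integral {-R..R} F" by (rule set_borel_integral_eq_integral(2)[OF F_R])
  finally show "(LINT x|lborel. F x) = integral {-R..R} F" .
qed

lemma lint_by_parts_test_fun:
  fixes u u' \<psi> :: "real \<Rightarrow> real"
  assumes \<psi>: "test_fun \<psi>" and S: "finite S" and u: "continuous_on UNIV u"
    and u': "\<And>x. x \<notin> S \<Longrightarrow> (u has_real_derivative u' x) (at x)" "loc_int u'"
  shows "(LINT x|lborel. u x * deriv \<psi> x) = - (LINT x|lborel. u' x * \<psi> x)"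
proof -
  obtain R where "0 < R" and R: "\<And>x. R \<le> \<bar>x\<bar> \<Longrightarrow> \<psi> x = 0 \<and> deriv \<psi> x = 0"
    using test_funD(4)[OF \<psi>] by blast
  have loc: "loc_int (\<lambda>x. u x * deriv \<psi> x)" "loc_int (\<lambda>x. u' x * \<psi> x)"
    using loc_int_mult_continuous[OF loc_int_continuous[OF u] test_funD(3)[OF \<psi>]]
      loc_int_mult_continuous[OF u'(2) test_funD(2)[OF \<psi>]] .
  have "((\<lambda>x. u' x * \<psi> x + u x * deriv \<psi> x) has_integral u R * \<psi> R - u (-R) * \<psi> (-R)) {-R..R}"
  proof (rule fundamental_theorem_of_calculus_interior_strong[OF S])
    show "continuous_on {-R..R} (\<lambda>x. u x * \<psi> x)"
      using continuous_on_mult[OF u test_funD(2)[OF \<psi>]] by (rule continuous_on_subset) simp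
    fix x assume "x \<in> {-R<..<R} - S"
    then have "((\<lambda>x. u x * \<psi> x) has_real_derivative u' x * \<psi> x + u x * deriv \<psi> x) (at x)"
      using DERIV_mult[OF u'(1) test_funD(1)[OF \<psi>]] by (simp add: mult.commute)
    then show "((\<lambda>x. u x * \<psi> x) has_vector_derivative u' x * \<psi> x + u x * deriv \<psi> x) (at x)"
      by (simp add: has_real_derivative_iff_has_vector_derivative)
  qed (use \<open>0 < R\<close> in simp)
  moreover have "\<psi> R = 0" "\<psi> (-R) = 0" using R[of R] R[of "-R"] \<open>0 < R\<close> by auto
  ultimately have "integral {-R..R} (\<lambda>x. u' x * \<psi> x + u x * deriv \<psi> x) = 0"
    by (simp add: integral_unique)
  moreover have "(\<lambda>x. u x * deriv \<psi> x) integrable_on {-R..R}" "(\<lambda>x. u' x * \<psi> x) integrable_on {-R..R}"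
    using loc unfolding loc_int_def by (auto intro: set_borel_integral_eq_integral(1))
  ultimately have "integral {-R..R} (\<lambda>x. u x * deriv \<psi> x) = - integral {-R..R} (\<lambda>x. u' x * \<psi> x)"
    by (simp add: integral_add add_eq_0_iff)
  moreover have "(LINT x|lborel. u x * deriv \<psi> x) = integral {-R..R} (\<lambda>x. u x * deriv \<psi> x)"
    "(LINT x|lborel. u' x * \<psi> x) = integral {-R..R} (\<lambda>x. u' x * \<psi> x)"
    using loc_int_vanishing_outside(2)[OF loc(1)] loc_int_vanishing_outside(2)[OF loc(2)] R by auto
  ultimately show ?thesis by simp
qed

section \<open>The profile as the inverse of \<open>\<xi>\<close>\<close>

locale wavefront_construction =
  fixes f h D g z :: "real \<Rightarrow> real" and c :: real and E :: "real set"
  assumes f_deriv: "\<And>u. u \<in> {0..1} \<Longrightarrow> (f has_real_derivative h u) (at u within {0..1})"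
    and D_cont: "continuous_on {0..1} D"
    and g_cont: "continuous_on {0..1} g" and g_0: "g 0 = 0" and g_1: "g 1 = 0"
    and E: "finite E" "E \<subseteq> {0<..<1}"
    and z_cont: "continuous_on {0..1} z"
    and z_deriv: "\<And>u. u \<in> {0<..<1} - E \<Longrightarrow> (z has_real_derivative h u - c - D u * g u / z u) (at u)"
    and z_0: "z 0 = 0" and z_1: "z 1 = 0" and z_E: "\<And>u. u \<in> E \<Longrightarrow> z u = 0"
    and D_div_z_neg: "\<And>u. u \<in> {0<..<1} - E \<Longrightarrow> D u / z u < 0"
    and D_div_z_integrable_near_E: "\<And>e. e \<in> E \<Longrightarrow> \<exists>\<delta>>0. (\<lambda>u. D u / z u) integrable_on {e-\<delta>..e+\<delta>}"
begin

definition dxi :: "real \<Rightarrow> real" where "dxi u = D u / z u"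

definition xi :: "real \<Rightarrow> real" where
  "xi u = (if 1/2 \<le> u then integral {1/2..u} dxi else - integral {u..1/2} dxi)"

lemma open_regular_points: "open ({0<..<1} - E)"
  using E(1) by (intro open_Diff finite_imp_closed) auto

lemma dxi_nonpos:
  assumes "u \<in> {0..1}"
  shows "dxi u \<le> 0"
proof (cases "u \<in> {0<..<1} - E")
  case False
  then have "z u = 0" using assms z_0 z_1 z_E by force
  then show ?thesis unfolding dxi_def by simp
qed (use D_div_z_neg in \<open>auto simp: dxi_def intro: less_imp_le\<close>)

lemma dxi_continuous: "u \<in> {0<..<1} - E \<Longrightarrow> isCont dxi u"
  unfolding dxi_def[abs_def] using D_div_z_neg[of u] D_cont open_regular_points
  by (intro isCont_divide DERIV_isCont[OF z_deriv] continuous_on_interior[OF D_cont])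
     (auto simp: interior_open)

lemma dxi_integrable: "0 < a \<Longrightarrow> b < 1 \<Longrightarrow> dxi integrable_on {a..b}"
proof (rule integrable_on_Icc_if_locally_integrable)
  fix x assume "0 < a" "b < 1" "x \<in> {a..b}"
  then have x: "x \<in> {0<..<1}" by auto
  show "\<exists>\<delta>>0. dxi integrable_on {x-\<delta>..x+\<delta>}"
  proof (cases "x \<in> E")
    case True
    then show ?thesis using D_div_z_integrable_near_E unfolding dxi_def[abs_def] by blast
  next
    case False
    then obtain \<delta> where "0 < \<delta>" "{x-\<delta>..x+\<delta>} \<subseteq> {0<..<1} - E"
      using Icc_neighbourhood_in_open[OF open_regular_points, of x] x by blast
    then show ?thesis
      using dxi_continuous by (blast intro: integrable_continuous_real continuous_at_imp_continuous_on)
  qed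
qed

lemma xi_diff:
  assumes "0 < a" "a \<le> b" "b < 1"
  shows "xi b - xi a = integral {a..b} dxi"
proof -
  have combine: "integral {x..y} dxi + integral {y..w} dxi = integral {x..w} dxi"
    if "0 < x" "x \<le> y" "y \<le> w" "w < 1" for x y w
    using that by (intro Henstock_Kurzweil_Integration.integral_combine dxi_integrable) auto
  consider "1/2 \<le> a" | "a < 1/2" "1/2 \<le> b" | "b < 1/2" by linarith
  then show ?thesis
  proof cases
    case 1 then show ?thesis using combine[of "1/2" a b] assms by (simp add: xi_def)
  next
    case 2 then show ?thesis using combine[of a "1/2" b] assms by (simp add: xi_def)
  next
    case 3 then show ?thesis using combine[of a b "1/2"] assms by (simp add: xi_def)
  qed
qed

lemma xi_antimono:
  assumes "0 < a" "a \<le> b" "b < 1"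
  shows "xi b \<le> xi a"
proof -
  have "integral {a..b} dxi \<le> integral {a..b} (\<lambda>_. 0)"
    using assms by (intro integral_le dxi_integrable dxi_nonpos) auto
  then show ?thesis using xi_diff[OF assms] by simp
qed

lemma xi_has_derivative:
  assumes u: "u \<in> {0<..<1} - E"
  shows "(xi has_real_derivative dxi u) (at u)"
proof -
  obtain \<delta> where \<delta>: "0 < \<delta>" "{u-\<delta>..u+\<delta>} \<subseteq> {0<..<1} - E"
    using Icc_neighbourhood_in_open[OF open_regular_points u] by blast
  have ends: "0 < u - \<delta>" "u + \<delta> < 1"
    using \<delta> subsetD[OF \<delta>(2), of "u - \<delta>"] subsetD[OF \<delta>(2), of "u + \<delta>"] by auto
  have "continuous_on {u-\<delta>..u+\<delta>} dxi"
    using \<delta>(2) dxi_continuous by (blast intro: continuous_at_imp_continuous_on)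
  then have "((\<lambda>x. integral {u-\<delta>..x} dxi) has_real_derivative dxi u) (at u)"
    using integral_has_real_derivative[of "u-\<delta>" "u+\<delta>" dxi u] at_within_Icc_at[of "u-\<delta>" u "u+\<delta>"] \<delta>(1)
    by auto
  then have "((\<lambda>x. xi (u-\<delta>) + integral {u-\<delta>..x} dxi) has_real_derivative dxi u) (at u)"
    using DERIV_add[OF DERIV_const] by fastforce
  then show ?thesis
  proof (rule has_field_derivative_transform_within_open[where S="{u-\<delta><..<u+\<delta>}"])
    fix x assume "x \<in> {u-\<delta><..<u+\<delta>}"
    then show "xi (u-\<delta>) + integral {u-\<delta>..x} dxi = xi x"
      using xi_diff[of "u-\<delta>" x] ends by auto
  qed (use \<delta> in auto)
qed

lemma xi_continuous:
  assumes u: "u \<in> {0<..<1}"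
  shows "isCont xi u"
proof -
  have "continuous_on {u/2..(u+1)/2} (\<lambda>x. xi (u/2) + integral {u/2..x} dxi)"
    using u by (intro continuous_intros indefinite_integral_continuous_1 dxi_integrable) auto
  moreover have "xi (u/2) + integral {u/2..x} dxi = xi x" if "x \<in> {u/2..(u+1)/2}" for x
    using xi_diff[of "u/2" x] that u by auto
  ultimately have "continuous_on {u/2..(u+1)/2} xi" using continuous_on_eq by blast
  moreover have "u \<in> interior {u/2..(u+1)/2}" using u by auto
  ultimately show ?thesis using continuous_on_interior by blast
qed

lemma xi_strict_antimono:
  assumes "0 < a" "a < b" "b < 1"
  shows "xi b < xi a"
proof -
  have "infinite {a<..<b}" using assms by simp
  then obtain p where "p \<in> {a<..<b} - E"
    using E(1) by (metis Diff_infinite_finite finite.emptyI ex_in_conv)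
  moreover have "open ({a<..<b} - E)" using E(1) by (intro open_Diff finite_imp_closed) auto
  ultimately obtain \<delta> where \<delta>: "0 < \<delta>" "{p-\<delta>..p+\<delta>} \<subseteq> {a<..<b} - E"
    using Icc_neighbourhood_in_open by blast
  have "xi (p+\<delta>) < xi (p-\<delta>)"
  proof (rule DERIV_neg_imp_decreasing[of "p-\<delta>" "p+\<delta>" xi])
    fix x assume "p - \<delta> \<le> x" "x \<le> p + \<delta>"
    then have "x \<in> {0<..<1} - E" using \<delta>(2) assms by auto
    then show "\<exists>y. (xi has_real_derivative y) (at x) \<and> y < 0"
      using xi_has_derivative D_div_z_neg unfolding dxi_def by blast
  qed (use \<delta> in simp)
  moreover have "a < p - \<delta>" "p + \<delta> < b"
    using \<delta> subsetD[OF \<delta>(2), of "p - \<delta>"] subsetD[OF \<delta>(2), of "p + \<delta>"] by auto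
  ultimately show ?thesis
    using xi_antimono[of "p+\<delta>" b] xi_antimono[of a "p-\<delta>"] \<delta>(1) assms by linarith
qed

(* The generalised inverse of the strictly decreasing xi: 1 to the left of its range,
   0 to the right of it. *)
definition phi :: "real \<Rightarrow> real" where
  "phi \<xi> = Sup ({0} \<union> {u \<in> {0<..<1}. \<xi> \<le> xi u})"

lemma phi_nonneg: "0 \<le> phi \<xi>"
  unfolding phi_def by (rule cSup_upper) (auto intro: bdd_aboveI[where M=1])

lemma phi_le_1: "phi \<xi> \<le> 1"
  unfolding phi_def by (rule cSup_least) auto

lemma le_phi: "u \<in> {0<..<1} \<Longrightarrow> \<xi> \<le> xi u \<Longrightarrow> u \<le> phi \<xi>"
  unfolding phi_def by (rule cSup_upper) (auto intro: bdd_aboveI[where M=1])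

lemma phi_le:
  assumes u: "u \<in> {0<..<1}" and "xi u < \<xi>"
  shows "phi \<xi> \<le> u"
  unfolding phi_def
proof (rule cSup_least)
  fix v assume "v \<in> {0} \<union> {u \<in> {0<..<1}. \<xi> \<le> xi u}"
  then show "v \<le> u"
    using xi_strict_antimono[of u v] u \<open>xi u < \<xi>\<close> by (cases "u < v") auto
qed simp

lemma phi_antimono: "\<xi>\<^sub>1 \<le> \<xi>\<^sub>2 \<Longrightarrow> phi \<xi>\<^sub>2 \<le> phi \<xi>\<^sub>1"
  unfolding phi_def by (rule cSup_subset_mono) (auto intro: bdd_aboveI[where M=1])

lemma xi_phi:
  assumes "phi \<xi> \<in> {0<..<1}"
  shows "xi (phi \<xi>) = \<xi>"
proof -
  define u where "u = phi \<xi>"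
  have u: "u \<in> {0<..<1}" using assms unfolding u_def .
  have lim: "(xi \<longlongrightarrow> xi u) (at u)" using xi_continuous[OF u] by (simp add: isCont_def)
  have "\<xi> \<le> xi u"
  proof (rule tendsto_lowerbound[OF tendsto_mono[OF at_le lim]])
    have "\<forall>\<^sub>F v in at_left u. v \<in> {0<..<u}" using u by (intro eventually_at_left_real) auto
    then show "\<forall>\<^sub>F v in at_left u. \<xi> \<le> xi v"
    proof eventually_elim
      case (elim v)
      then show ?case using phi_le[of v \<xi>] u unfolding u_def by (cases "\<xi> \<le> xi v") auto
    qed
  qed auto
  moreover have "xi u \<le> \<xi>"
  proof (rule tendsto_upperbound[OF tendsto_mono[OF at_le lim]])
    have "\<forall>\<^sub>F v in at_right u. v \<in> {u<..<1}" using u by (intro eventually_at_right_real) auto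
    then show "\<forall>\<^sub>F v in at_right u. xi v \<le> \<xi>"
    proof eventually_elim
      case (elim v)
      then show ?case using le_phi[of v \<xi>] u unfolding u_def by (cases "xi v \<le> \<xi>") auto
    qed
  qed auto
  ultimately show ?thesis unfolding u_def by simp
qed

lemma eventually_less_phi:
  assumes a: "a < phi \<xi>\<^sub>0"
  shows "\<forall>\<^sub>F \<xi> in at \<xi>\<^sub>0. a < phi \<xi>"
proof (cases "a < 0")
  case True
  then show ?thesis using phi_nonneg by (auto intro: always_eventually less_le_trans)
next
  case False
  define u where "u = (a + phi \<xi>\<^sub>0) / 2"
  have u: "a < u" "u < phi \<xi>\<^sub>0" "u \<in> {0<..<1}"
    using a False phi_le_1[of \<xi>\<^sub>0] unfolding u_def by auto
  have "\<xi>\<^sub>0 < xi u"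
  proof (rule ccontr)
    define u' where "u' = (u + phi \<xi>\<^sub>0) / 2"
    have u': "u < u'" "u' < phi \<xi>\<^sub>0" "u' \<in> {0<..<1}"
      using u phi_le_1[of \<xi>\<^sub>0] unfolding u'_def by auto
    assume "\<not> \<xi>\<^sub>0 < xi u"
    then have "xi u' < \<xi>\<^sub>0" using xi_strict_antimono[of u u'] u u' by auto
    then show False using phi_le[OF u'(3)] u' by fastforce
  qed
  then have "\<forall>\<^sub>F \<xi> in at \<xi>\<^sub>0. \<xi> < xi u" by (rule order_tendstoD(2)[OF tendsto_ident_at])
  then show ?thesis
  proof eventually_elim
    case (elim \<xi>)
    then show ?case using le_phi[OF u(3), of \<xi>] u(1) by linarith
  qed
qed

lemma eventually_phi_less:
  assumes a: "phi \<xi>\<^sub>0 < a"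
  shows "\<forall>\<^sub>F \<xi> in at \<xi>\<^sub>0. phi \<xi> < a"
proof (cases "1 < a")
  case True
  then show ?thesis using phi_le_1 by (auto intro: always_eventually le_less_trans)
next
  case False
  define u where "u = (a + phi \<xi>\<^sub>0) / 2"
  have u: "u < a" "phi \<xi>\<^sub>0 < u" "u \<in> {0<..<1}"
    using a False phi_nonneg[of \<xi>\<^sub>0] unfolding u_def by auto
  have "xi u < \<xi>\<^sub>0" using le_phi[OF u(3), of \<xi>\<^sub>0] u(2) by linarith
  then have "\<forall>\<^sub>F \<xi> in at \<xi>\<^sub>0. xi u < \<xi>" by (rule order_tendstoD(1)[OF tendsto_ident_at])
  then show ?thesis
  proof eventually_elim
    case (elim \<xi>)
    then show ?case using phi_le[OF u(3), of \<xi>] u(1) by linarith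
  qed
qed

lemma phi_continuous: "isCont phi \<xi>\<^sub>0"
  unfolding isCont_def by (intro order_tendstoI eventually_less_phi eventually_phi_less)

lemma phi_at_bot: "(phi \<longlongrightarrow> 1) at_bot"
proof (rule order_tendstoI)
  fix a :: real assume "a < 1"
  define u where "u = max (1/2) ((a + 1) / 2)"
  have u: "a < u" "u \<in> {0<..<1}" using \<open>a < 1\<close> unfolding u_def by (auto simp: less_max_iff_disj)
  have "\<forall>\<^sub>F \<xi> in at_bot. \<xi> \<le> xi u" by (rule eventually_le_at_bot)
  then show "\<forall>\<^sub>F \<xi> in at_bot. a < phi \<xi>"
  proof eventually_elim
    case (elim \<xi>)
    then show ?case using le_phi[OF u(2), of \<xi>] u(1) by linarith
  qed
qed (use phi_le_1 in \<open>auto intro: always_eventually le_less_trans\<close>)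

lemma phi_at_top: "(phi \<longlongrightarrow> 0) at_top"
proof (rule order_tendstoI)
  fix a :: real assume "0 < a"
  define u where "u = min (1/2) (a / 2)"
  have u: "u < a" "u \<in> {0<..<1}" using \<open>0 < a\<close> unfolding u_def by auto
  have "\<forall>\<^sub>F \<xi> in at_top. xi u < \<xi>" by (rule eventually_gt_at_top)
  then show "\<forall>\<^sub>F \<xi> in at_top. phi \<xi> < a"
  proof eventually_elim
    case (elim \<xi>)
    then show ?case using phi_le[OF u(2), of \<xi>] u(1) by linarith
  qed
qed (use phi_nonneg in \<open>auto intro: always_eventually less_le_trans\<close>)

lemma D_z_nonzero: "u \<in> {0<..<1} - E \<Longrightarrow> D u \<noteq> 0 \<and> z u \<noteq> 0"
  using D_div_z_neg[of u] by (metis div_0 div_by_0 less_irrefl)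

lemma z_zero_if_not_regular: "u \<in> {0..1} \<Longrightarrow> u \<notin> {0<..<1} - E \<Longrightarrow> z u = 0"
  using z_0 z_1 z_E by force

lemma phi_has_derivative:
  assumes "phi \<xi> \<in> {0<..<1} - E"
  shows "(phi has_real_derivative z (phi \<xi>) / D (phi \<xi>)) (at \<xi>)"
proof -
  define u where "u = phi \<xi>"
  have u: "u \<in> {0<..<1} - E" using assms unfolding u_def .
  define u\<^sub>1 u\<^sub>2 where "u\<^sub>1 = u / 2" and "u\<^sub>2 = (u + 1) / 2"
  have u\<^sub>1\<^sub>2: "u\<^sub>1 \<in> {0<..<1}" "u\<^sub>2 \<in> {0<..<1}" "u\<^sub>1 < u" "u < u\<^sub>2"
    using u unfolding u\<^sub>1_def u\<^sub>2_def by auto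
  have "xi u = \<xi>" using xi_phi u unfolding u_def by auto
  then have \<xi>: "xi u\<^sub>2 < \<xi>" "\<xi> < xi u\<^sub>1"
    using xi_strict_antimono[of u u\<^sub>2] xi_strict_antimono[of u\<^sub>1 u] u u\<^sub>1\<^sub>2 by auto
  have "(phi has_real_derivative inverse (dxi u)) (at \<xi>)"
  proof (rule DERIV_inverse_function[where f=xi and a="xi u\<^sub>2" and b="xi u\<^sub>1"])
    show "(xi has_real_derivative dxi u) (at (phi \<xi>))"
      using xi_has_derivative[OF u] unfolding u_def .
    show "dxi u \<noteq> 0" using D_div_z_neg[OF u] unfolding dxi_def by linarith
    fix y assume y: "xi u\<^sub>2 < y" "y < xi u\<^sub>1"
    then have "phi y \<in> {0<..<1}"
      using le_phi[of u\<^sub>1 y] phi_le[of u\<^sub>2 y] u\<^sub>1\<^sub>2 by fastforce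
    then show "xi (phi y) = y" by (rule xi_phi)
  qed (use \<xi> phi_continuous in auto)
  then show ?thesis unfolding u_def dxi_def by simp
qed

definition exceptional_points :: "real set" where
  "exceptional_points = xi ` E \<union> {Inf {\<xi>. phi \<xi> = 0}, Sup {\<xi>. phi \<xi> = 1}}"

lemma finite_exceptional_points: "finite exceptional_points"
  unfolding exceptional_points_def using E(1) by simp

lemma phi_regular_or_locally_constant:
  assumes "\<xi> \<notin> exceptional_points"
  shows "phi \<xi> \<in> {0<..<1} - E \<or> phi \<xi> \<in> {0, 1} \<and> (\<forall>\<^sub>F x in nhds \<xi>. phi x = phi \<xi>)"
proof -
  consider "phi \<xi> = 0" | "phi \<xi> = 1" | "phi \<xi> \<in> {0<..<1}"
    using phi_nonneg[of \<xi>] phi_le_1[of \<xi>] by fastforce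
  then show ?thesis
  proof cases
    case 1
    then obtain \<xi>\<^sub>1 where "\<xi>\<^sub>1 < \<xi>" "phi \<xi>\<^sub>1 = 0"
      using ex_less_if_ne_Inf[of \<xi> "{\<xi>. phi \<xi> = 0}"] assms unfolding exceptional_points_def by auto
    then have "phi x = 0" if "x \<in> {\<xi>\<^sub>1<..}" for x
      using that phi_antimono[of \<xi>\<^sub>1 x] phi_nonneg[of x] by auto
    then have "\<forall>\<^sub>F x in nhds \<xi>. phi x = phi \<xi>"
      using eventually_nhds_in_open[of "{\<xi>\<^sub>1<..}" \<xi>] \<open>\<xi>\<^sub>1 < \<xi>\<close> 1
      by (auto elim: eventually_mono)
    then show ?thesis using 1 by simp
  next
    case 2
    then obtain \<xi>\<^sub>1 where "\<xi> < \<xi>\<^sub>1" "phi \<xi>\<^sub>1 = 1"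
      using ex_greater_if_ne_Sup[of \<xi> "{\<xi>. phi \<xi> = 1}"] assms unfolding exceptional_points_def by auto
    then have "phi x = 1" if "x \<in> {..<\<xi>\<^sub>1}" for x
      using that phi_antimono[of x \<xi>\<^sub>1] phi_le_1[of x] by auto
    then have "\<forall>\<^sub>F x in nhds \<xi>. phi x = phi \<xi>"
      using eventually_nhds_in_open[of "{..<\<xi>\<^sub>1}" \<xi>] \<open>\<xi> < \<xi>\<^sub>1\<close> 2
      by (auto elim: eventually_mono)
    then show ?thesis using 2 by simp
  next
    case 3
    have "phi \<xi> \<notin> E"
    proof
      assume "phi \<xi> \<in> E"
      then have "\<xi> \<in> xi ` E" using xi_phi[OF 3] by force
      then show False using assms unfolding exceptional_points_def by simp
    qed
    then show ?thesis using 3 by simp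
  qed
qed

definition dphi :: "real \<Rightarrow> real" where "dphi \<xi> = z (phi \<xi>) / D (phi \<xi>)"

definition flux :: "real \<Rightarrow> real" where "flux \<xi> = z (phi \<xi>) - f (phi \<xi>) + c * phi \<xi>"

lemma phi_has_derivative_off_exceptional:
  assumes "\<xi> \<notin> exceptional_points"
  shows "(phi has_real_derivative dphi \<xi>) (at \<xi>)"
  using phi_regular_or_locally_constant[OF assms]
proof
  assume "phi \<xi> \<in> {0, 1} \<and> (\<forall>\<^sub>F x in nhds \<xi>. phi x = phi \<xi>)"
  then show ?thesis
    using DERIV_cong_ev[of \<xi> \<xi> phi "\<lambda>_. phi \<xi>" "dphi \<xi>" 0] z_0 z_1
    by (auto simp: dphi_def eventually_mono)
qed (simp add: phi_has_derivative dphi_def)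

lemma flux_has_derivative_off_exceptional:
  assumes "\<xi> \<notin> exceptional_points"
  shows "(flux has_real_derivative - g (phi \<xi>)) (at \<xi>)"
  using phi_regular_or_locally_constant[OF assms]
proof
  assume u: "phi \<xi> \<in> {0<..<1} - E"
  have phi': "(phi has_real_derivative dphi \<xi>) (at \<xi>)"
    by (rule phi_has_derivative_off_exceptional[OF assms])
  have "(f has_real_derivative h (phi \<xi>)) (at (phi \<xi>))"
    using f_deriv[of "phi \<xi>"] at_within_Icc_at[of 0 "phi \<xi>" 1] u by auto
  then have "(flux has_real_derivative
      (h (phi \<xi>) - c - D (phi \<xi>) * g (phi \<xi>) / z (phi \<xi>)) * dphi \<xi> - h (phi \<xi>) * dphi \<xi> + c * dphi \<xi>) (at \<xi>)"
    unfolding flux_def[abs_def]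
    by (intro DERIV_add DERIV_diff DERIV_cmult phi' DERIV_chain2[OF z_deriv[OF u] phi']
        DERIV_chain2[OF _ phi'])
  moreover have "D (phi \<xi>) \<noteq> 0" "z (phi \<xi>) \<noteq> 0" using D_z_nonzero[OF u] by auto
  ultimately show ?thesis by (simp add: dphi_def field_simps)
next
  assume "phi \<xi> \<in> {0, 1} \<and> (\<forall>\<^sub>F x in nhds \<xi>. phi x = phi \<xi>)"
  then show ?thesis
    using DERIV_cong_ev[of \<xi> \<xi> flux "\<lambda>_. flux \<xi>" "- g (phi \<xi>)" 0] g_0 g_1
    by (auto simp: flux_def eventually_mono)
qed

lemma phi_in_01: "phi \<xi> \<in> {0..1}"
  using phi_nonneg phi_le_1 by simp

lemma D_mult_dphi: "D (phi \<xi>) * dphi \<xi> = z (phi \<xi>)"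
  using D_z_nonzero[of "phi \<xi>"] z_zero_if_not_regular[OF phi_in_01, of \<xi>]
  unfolding dphi_def by (cases "D (phi \<xi>) = 0") auto

lemma dphi_nonpos: "dphi \<xi> \<le> 0"
proof (cases "phi \<xi> \<in> {0<..<1} - E")
  case True
  have "dphi \<xi> = inverse (D (phi \<xi>) / z (phi \<xi>))" unfolding dphi_def by simp
  then show ?thesis
    using negative_imp_inverse_negative[OF D_div_z_neg[OF True]] by linarith
qed (simp add: dphi_def z_zero_if_not_regular[OF phi_in_01])

lemma phi_comp_continuous: "continuous_on {0..1} q \<Longrightarrow> continuous_on UNIV (\<lambda>\<xi>. q (phi \<xi>))"
  by (rule continuous_on_compose2[of "{0..1}" q UNIV phi])
     (use phi_in_01 phi_continuous in \<open>auto intro: continuous_at_imp_continuous_on\<close>)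

lemma dphi_loc_int: "loc_int dphi"
  unfolding loc_int_def
proof (intro allI)
  fix a b :: real
  have "continuous_on UNIV phi" using phi_continuous by (simp add: continuous_at_imp_continuous_on)
  then have "(dphi has_integral phi b - phi a) {a..b}" if "a \<le> b"
    using that phi_has_derivative_off_exceptional
    by (intro fundamental_theorem_of_calculus_interior_strong[OF finite_exceptional_points])
       (auto simp: has_real_derivative_iff_has_vector_derivative[symmetric] intro: continuous_on_subset)
  then have "(\<lambda>\<xi>. - dphi \<xi>) integrable_on {a..b}"
    by (cases "a \<le> b") (auto intro: integrable_neg)
  then have "(\<lambda>\<xi>. - dphi \<xi>) absolutely_integrable_on {a..b}"
    using dphi_nonpos by (intro nonnegative_absolutely_integrable_1) (auto simp: le_minus_iff)
  then have "integrable lebesgue (\<lambda>\<xi>. - (indicator {a..b} \<xi> *\<^sub>R - dphi \<xi>))"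
    unfolding set_integrable_def by (rule integrable_minus)
  then have "integrable (completion lborel) (\<lambda>\<xi>. indicator {a..b} \<xi> *\<^sub>R dphi \<xi>)"
    by simp
  moreover have "(\<lambda>\<xi>. indicator {a..b} \<xi> *\<^sub>R dphi \<xi>) \<in> borel_measurable lborel"
    unfolding dphi_def
    using borel_measurable_continuous_onI[OF phi_comp_continuous[OF z_cont]]
      borel_measurable_continuous_onI[OF phi_comp_continuous[OF D_cont]]
    by (intro borel_measurable_scaleR borel_measurable_indicator borel_measurable_divide) auto
  ultimately show "set_integrable lborel {a..b} dphi"
    unfolding set_integrable_def using integrable_completion by blast
qed

lemma phi_continuous_on: "continuous_on UNIV phi"
  using phi_continuous by (simp add: continuous_at_imp_continuous_on)

lemma phi_weak_derivative:
  assumes "test_fun \<psi>"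
  shows "(LINT \<xi>|lborel. phi \<xi> * deriv \<psi> \<xi>) = - (LINT \<xi>|lborel. dphi \<xi> * \<psi> \<xi>)"
  using assms finite_exceptional_points phi_continuous_on phi_has_derivative_off_exceptional dphi_loc_int
  by (rule lint_by_parts_test_fun)

lemma flux_weak_equation:
  assumes \<psi>: "test_fun \<psi>"
  shows "(LINT \<xi>|lborel. (D (phi \<xi>) * dphi \<xi> - f (phi \<xi>) + c * phi \<xi>) * deriv \<psi> \<xi>
                          - g (phi \<xi>) * \<psi> \<xi>) = 0"
proof -
  have "continuous_on {0..1} f" using f_deriv by (rule DERIV_continuous_on)
  then have flux_cont: "continuous_on UNIV flux"
    unfolding flux_def[abs_def]
    by (intro continuous_intros phi_comp_continuous z_cont phi_continuous_on)
  have g_phi_cont: "continuous_on UNIV (\<lambda>\<xi>. g (phi \<xi>))" by (rule phi_comp_continuous[OF g_cont])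
  obtain R where R: "\<And>x. R \<le> \<bar>x\<bar> \<Longrightarrow> \<psi> x = 0 \<and> deriv \<psi> x = 0"
    using test_funD(4)[OF \<psi>] by blast
  have "integrable lborel (\<lambda>\<xi>. flux \<xi> * deriv \<psi> \<xi>)"
    using loc_int_mult_continuous[OF loc_int_continuous[OF flux_cont] test_funD(3)[OF \<psi>]]
    by (rule loc_int_vanishing_outside(1)[where R=R]) (use R in simp)
  moreover have "integrable lborel (\<lambda>\<xi>. g (phi \<xi>) * \<psi> \<xi>)"
    using loc_int_mult_continuous[OF loc_int_continuous[OF g_phi_cont] test_funD(2)[OF \<psi>]]
    by (rule loc_int_vanishing_outside(1)[where R=R]) (use R in simp)
  moreover have "(LINT \<xi>|lborel. flux \<xi> * deriv \<psi> \<xi>) = - (LINT \<xi>|lborel. - g (phi \<xi>) * \<psi> \<xi>)"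
    using \<psi> finite_exceptional_points flux_cont flux_has_derivative_off_exceptional
      loc_int_continuous[OF continuous_on_minus[OF g_phi_cont]]
    by (rule lint_by_parts_test_fun)
  ultimately show ?thesis by (simp add: D_mult_dphi flux_def[symmetric])
qed

theorem wavefront_phi: "wavefront D f g c phi \<and> (phi \<longlongrightarrow> 1) at_bot \<and> (phi \<longlongrightarrow> 0) at_top"
proof (intro conjI phi_at_bot phi_at_top)
  have "\<exists>\<xi>\<^sub>1 \<xi>\<^sub>2. phi \<xi>\<^sub>1 \<noteq> phi \<xi>\<^sub>2"
  proof -
    obtain \<xi>\<^sub>1 where "1/2 < phi \<xi>\<^sub>1"
      using eventually_happens'[OF _ order_tendstoD(1)[OF phi_at_bot, of "1/2"]] by auto
    moreover obtain \<xi>\<^sub>2 where "phi \<xi>\<^sub>2 < 1/2"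
      using eventually_happens'[OF _ order_tendstoD(2)[OF phi_at_top, of "1/2"]] by auto
    ultimately have "phi \<xi>\<^sub>1 \<noteq> phi \<xi>\<^sub>2" by simp
    then show ?thesis by blast
  qed
  moreover have "loc_int (\<lambda>\<xi>. D (phi \<xi>) * dphi \<xi>)"
    unfolding D_mult_dphi by (rule loc_int_continuous[OF phi_comp_continuous[OF z_cont]])
  ultimately show "wavefront D f g c phi"
    unfolding wavefront_def tw_profile_def
    using phi_continuous_on phi_in_01 dphi_loc_int phi_weak_derivative flux_weak_equation phi_antimono
    by (auto intro!: exI[of _ dphi] antimonoI)
qed

end

section \<open>The forward-backward diffusion setting\<close>

locale forward_backward_diffusion =
  fixes f h D g :: "real \<Rightarrow> real" and \<alpha> \<gamma> c :: real
  assumes f_C1: "\<forall>u\<in>{0..1}. (f has_real_derivative h u) (at u within {0..1})"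
    and h_cont: "continuous_on {0..1} h"
    and D_C1: "\<exists>D'. (\<forall>u\<in>{0..1}. (D has_real_derivative D' u) (at u within {0..1}))
                     \<and> continuous_on {0..1} D'"
    and \<alpha>: "0 < \<alpha>" "\<alpha> < 1"
    and D_pos: "\<forall>u. 0 < u \<and> u < \<alpha> \<longrightarrow> D u > 0"
    and D_neg: "\<forall>u. \<alpha> < u \<and> u < 1 \<longrightarrow> D u < 0"
    and g_cont: "continuous_on {0..1} g"
    and \<gamma>: "0 < \<gamma>" "\<gamma> < 1"
    and g_neg: "\<forall>u. 0 < u \<and> u < \<gamma> \<longrightarrow> g u < 0"
    and g_pos: "\<forall>u. \<gamma> < u \<and> u < 1 \<longrightarrow> g u > 0"
    and g_zeros: "g 0 = 0" "g \<gamma> = 0" "g 1 = 0"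
begin

lemma D_cont: "continuous_on {0..1} D"
  using D_C1 by (blast intro: DERIV_continuous_on)

lemma D_alpha: "D \<alpha> = 0"
proof -
  have lim: "(D \<longlongrightarrow> D \<alpha>) (at \<alpha>)"
    using isCont_if_continuous_on_Icc[OF D_cont] \<alpha> by (simp add: isCont_def)
  have "0 \<le> D \<alpha>"
  proof (rule tendsto_lowerbound[OF tendsto_mono[OF at_le lim]])
    show "\<forall>\<^sub>F u in at_left \<alpha>. 0 \<le> D u"
      using eventually_at_left_real[OF \<alpha>(1)] by eventually_elim (use D_pos in force)
  qed auto
  moreover have "D \<alpha> \<le> 0"
  proof (rule tendsto_upperbound[OF tendsto_mono[OF at_le lim]])
    show "\<forall>\<^sub>F u in at_right \<alpha>. D u \<le> 0"
      using eventually_at_right_real[OF \<alpha>(2)] by eventually_elim (use D_neg in force)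
  qed auto
  ultimately show ?thesis by simp
qed

lemma h_minus_c_bound: obtains M where "0 \<le> M" "\<And>u. u \<in> {0..1} \<Longrightarrow> \<bar>h u - c\<bar> \<le> M"
proof -
  have "continuous_on {0..1} (\<lambda>u. h u - c)" using h_cont by (intro continuous_intros)
  then obtain M where "\<And>u. u \<in> {0..1} \<Longrightarrow> \<bar>h u - c\<bar> \<le> M"
    using abs_bound_if_continuous_on_Icc by blast
  moreover from this[of 0] have "0 \<le> M" by simp
  ultimately show thesis using that by blast
qed

lemma D_derivative_bound:
  obtains D' K where
    "\<And>u. u \<in> {0<..<1} \<Longrightarrow> (D has_real_derivative D' u) (at u) \<and> \<bar>D' u\<bar> \<le> K" "0 \<le> K"
proof -
  obtain D' where D': "\<And>u. u \<in> {0..1} \<Longrightarrow> (D has_real_derivative D' u) (at u within {0..1})"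
    "continuous_on {0..1} D'"
    using D_C1 by blast
  obtain K where K: "\<And>u. u \<in> {0..1} \<Longrightarrow> \<bar>D' u\<bar> \<le> K"
    using abs_bound_if_continuous_on_Icc[OF D'(2)] by blast
  have "(D has_real_derivative D' u) (at u)" if "u \<in> {0<..<1}" for u
    using D'(1)[of u] at_within_Icc_at[of 0 u 1] that by auto
  moreover have "0 \<le> K" using K[of 0] by force
  ultimately show thesis using K by (intro that[of D' K]) auto
qed

lemma D_neg_near_gamma:
  assumes "\<alpha> < \<gamma>"
  obtains d where "0 < d" "\<forall>\<^sub>F u in at \<gamma>. D u < - d"
proof -
  have "D \<gamma> < 0" using D_neg assms \<gamma> by auto
  moreover have "(D \<longlongrightarrow> D \<gamma>) (at \<gamma>)"
    using isCont_if_continuous_on_Icc[OF D_cont, of \<gamma>] \<gamma> by (simp add: isCont_def)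
  ultimately have "\<forall>\<^sub>F u in at \<gamma>. D u < D \<gamma> / 2" by (intro order_tendstoD(2)) auto
  then show thesis using that[of "- D \<gamma> / 2"] \<open>D \<gamma> < 0\<close> by simp
qed

end

locale forward_backward_solution = forward_backward_diffusion +
  fixes z :: "real \<Rightarrow> real" and E :: "real set"
  assumes E: "finite E" "E \<subseteq> {0<..<1}" "\<alpha> \<in> E"
    and z_cont: "continuous_on {0..1} z"
    and z_deriv: "\<And>u. u \<in> {0<..<1} - E \<Longrightarrow> (z has_real_derivative h u - c - D u * g u / z u) (at u)"
    and z_neg: "\<And>u. 0 < u \<Longrightarrow> u < \<alpha> \<Longrightarrow> z u < 0"
    and z_pos: "\<And>u. u \<in> {\<alpha><..<1} - E \<Longrightarrow> 0 < z u"
    and z_zero: "z 0 = 0" "z 1 = 0" "\<And>u. u \<in> E \<Longrightarrow> z u = 0"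
begin

lemma D_div_z_neg:
  assumes u: "u \<in> {0<..<1} - E"
  shows "D u / z u < 0"
proof (cases "u < \<alpha>")
  case True
  then show ?thesis using u D_pos z_neg by (simp add: divide_pos_neg)
next
  case False
  then have "\<alpha> < u" using u E(3) by (cases "u = \<alpha>") auto
  then show ?thesis using u D_neg z_pos by (simp add: divide_neg_pos)
qed

lemma wavefront_if_D_div_z_integrable_near_E:
  assumes "\<And>e. e \<in> E \<Longrightarrow> \<exists>\<delta>>0. (\<lambda>u. D u / z u) integrable_on {e-\<delta>..e+\<delta>}"
  shows "\<exists>\<phi>. wavefront D f g c \<phi> \<and> (\<phi> \<longlongrightarrow> 1) at_bot \<and> (\<phi> \<longlongrightarrow> 0) at_top"
proof -
  interpret wavefront_construction f h D g z c E
    using f_C1 D_cont g_cont g_zeros E z_cont z_deriv z_zero D_div_z_neg assms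
    by unfold_locales auto
  show ?thesis using wavefront_phi by blast
qed

lemma eventually_regular_near:
  assumes "e \<in> {0<..<1}"
  shows "\<forall>\<^sub>F u in at e. u \<in> {0<..<1} - E"
  using eventually_at_not_in_finite[OF E(1), of e] eventually_nhds_in_open[of "{0<..<1}" e] assms
  by (auto simp: eventually_at_filter elim: eventually_elim2)

lemma D_div_z_integrable_near_alpha_if_ne_gamma:
  assumes "\<alpha> \<noteq> \<gamma>"
  shows "\<exists>\<delta>>0. (\<lambda>u. D u / z u) integrable_on {\<alpha>-\<delta>..\<alpha>+\<delta>}"
proof -
  define \<sigma> where "\<sigma> = sgn (g \<alpha>)"
  define gmin where "gmin = \<bar>g \<alpha>\<bar> / 2"
  have "g \<alpha> \<noteq> 0" using g_neg g_pos \<alpha> assms by (cases "\<alpha> < \<gamma>") force+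
  moreover have "\<sigma> * g \<alpha> = \<bar>g \<alpha>\<bar>" unfolding \<sigma>_def by (simp add: abs_sgn mult.commute)
  ultimately have gmin: "0 < gmin" "gmin < \<sigma> * g \<alpha>" unfolding gmin_def by auto
  have "((\<lambda>u. \<sigma> * g u) \<longlongrightarrow> \<sigma> * g \<alpha>) (at \<alpha>)"
    using isCont_if_continuous_on_Icc[OF g_cont] \<alpha> by (intro tendsto_mult_left) (simp add: isCont_def)
  then have "\<forall>\<^sub>F u in at \<alpha>. gmin < \<sigma> * g u" using gmin(2) by (rule order_tendstoD(1))
  then have "\<forall>\<^sub>F u in at \<alpha>. u \<in> {0<..<1} - E \<and> gmin < \<sigma> * g u"
    using eventually_regular_near[of \<alpha>] \<alpha> by (simp add: eventually_conj_iff)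
  then obtain \<delta> where "0 < \<delta>"
    and \<delta>: "\<And>u. u \<in> {\<alpha>-\<delta>..\<alpha>+\<delta>} \<Longrightarrow> u \<noteq> \<alpha> \<Longrightarrow> u \<in> {0<..<1} - E \<and> gmin < \<sigma> * g u"
    by (rule eventually_at_imp_punctured_Icc) blast
  have sub: "{\<alpha>-\<delta>..\<alpha>+\<delta>} \<subseteq> {0..1}"
    using \<delta>[of "\<alpha> - \<delta>"] \<delta>[of "\<alpha> + \<delta>"] \<open>0 < \<delta>\<close> by auto
  have integrable: "(\<lambda>u. D u / z u) integrable_on {a..b}"
    if "{a..b} \<subseteq> {\<alpha>-\<delta>..\<alpha>+\<delta>}" "a \<le> b" "\<alpha> \<notin> {a<..<b}" for a b
  proof (rule D_div_z_integrable_if_g_bounded_away[OF \<open>a \<le> b\<close>])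
    show "continuous_on {a..b} z" "continuous_on {a..b} h" "continuous_on {a..b} D"
      using that(1) sub by (auto intro: continuous_on_subset[OF z_cont] continuous_on_subset[OF h_cont]
          continuous_on_subset[OF D_cont])
    fix x assume "x \<in> {a<..<b}"
    then have x: "x \<in> {0<..<1} - E" "gmin < \<sigma> * g x" using \<delta>[of x] that by auto
    show "(z has_real_derivative h x - c - D x * g x / z x) (at x)" using z_deriv[OF x(1)] .
    show "z x \<noteq> 0 \<and> D x / z x \<le> 0" using D_div_z_neg[OF x(1)] by auto
    show "gmin \<le> \<sigma> * g x" using x(2) by simp
  qed (rule gmin(1))
  show ?thesis
    using integrable[of "\<alpha> - \<delta>" \<alpha>] integrable[of \<alpha> "\<alpha> + \<delta>"] \<open>0 < \<delta>\<close>
    by (intro integrable_on_neighbourhood_if_both_sides) auto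
qed

lemma D_div_z_integrable_left_of_alpha_if_eq_gamma:
  assumes "\<alpha> = \<gamma>" and "holder_below g \<gamma>"
  shows "\<exists>\<epsilon>>0. (\<lambda>u. D u / z u) integrable_on {\<alpha>-\<epsilon>..\<alpha>}"
proof -
  obtain L \<tau> \<delta> where L: "0 < L" and \<tau>: "0 < \<tau>" "\<tau> < 1" and "0 < \<delta>"
    and holder: "\<And>u. u \<in> {0..1} \<Longrightarrow> \<bar>u - \<gamma>\<bar> < \<delta> \<Longrightarrow> L * \<bar>u - \<gamma>\<bar> powr \<tau> \<le> \<bar>g u\<bar>"
    using assms(2) unfolding holder_below_def by blast
  obtain D' K
    where D': "\<And>u. u \<in> {0<..<1} \<Longrightarrow> (D has_real_derivative D' u) (at u) \<and> \<bar>D' u\<bar> \<le> K"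
      and K: "0 \<le> K"
    by (rule D_derivative_bound) blast
  obtain M where M: "0 \<le> M" "\<And>u. u \<in> {0..1} \<Longrightarrow> \<bar>h u - c\<bar> \<le> M"
    by (rule h_minus_c_bound) blast
  have "\<forall>\<^sub>F u in at_left \<alpha>. u \<in> {max 0 (\<alpha> - \<delta>)<..<\<alpha>} - E"
    using \<alpha> \<open>0 < \<delta>\<close> by (intro eventually_at_left_avoiding_finite E(1)) simp
  then have "\<forall>\<^sub>F u in at_left \<alpha>. (z has_real_derivative h u - c - D u * g u / z u) (at u)
      \<and> z u < 0 \<and> 0 < D u \<and> (D has_real_derivative D' u) (at u) \<and> \<bar>D' u\<bar> \<le> K
      \<and> \<bar>h u - c\<bar> \<le> M \<and> L * (\<alpha> - u) powr \<tau> \<le> - g u"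
  proof eventually_elim
    case (elim u)
    then have u: "u \<in> {0<..<1} - E" "u < \<gamma>" "\<bar>u - \<gamma>\<bar> < \<delta>" using \<alpha> assms(1) by auto
    moreover have "g u < 0" using g_neg u by auto
    ultimately have "L * (\<alpha> - u) powr \<tau> \<le> - g u" using holder[of u] assms(1) by simp
    then show ?case using z_deriv[of u] z_neg[of u] D_pos D'[of u] M(2)[of u] u assms(1) by auto
  qed
  then show ?thesis by (rule D_div_z_integrable_left_of_degenerate_point[OF \<tau> L K M(1)])
qed

lemma D_div_z_integrable_right_of_alpha_if_eq_gamma:
  assumes "\<alpha> = \<gamma>" and "holder_below g \<gamma>"
  shows "\<exists>\<epsilon>>0. (\<lambda>u. D u / z u) integrable_on {\<alpha>..\<alpha>+\<epsilon>}"
proof -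
  obtain L \<tau> \<delta> where L: "0 < L" and \<tau>: "0 < \<tau>" "\<tau> < 1" and "0 < \<delta>"
    and holder: "\<And>u. u \<in> {0..1} \<Longrightarrow> \<bar>u - \<gamma>\<bar> < \<delta> \<Longrightarrow> L * \<bar>u - \<gamma>\<bar> powr \<tau> \<le> \<bar>g u\<bar>"
    using assms(2) unfolding holder_below_def by blast
  obtain D' K
    where D': "\<And>u. u \<in> {0<..<1} \<Longrightarrow> (D has_real_derivative D' u) (at u) \<and> \<bar>D' u\<bar> \<le> K"
      and K: "0 \<le> K"
    by (rule D_derivative_bound) blast
  obtain M where M: "0 \<le> M" "\<And>u. u \<in> {0..1} \<Longrightarrow> \<bar>h u - c\<bar> \<le> M"
    by (rule h_minus_c_bound) blast
  have "\<forall>\<^sub>F u in nhds \<alpha>. u \<in> {0<..<1}" using \<alpha> by (intro eventually_nhds_in_open) auto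
  then have "\<forall>\<^sub>F u in nhds \<alpha>. (D has_real_derivative D' u) (at u) \<and> \<bar>D' u\<bar> \<le> K"
    by eventually_elim (rule D')
  moreover have "\<forall>\<^sub>F u in at_right \<alpha>. u \<in> {\<alpha><..<min 1 (\<alpha> + \<delta>)} - E"
    using \<alpha> \<open>0 < \<delta>\<close> by (intro eventually_at_right_avoiding_finite E(1)) simp
  then have "\<forall>\<^sub>F u in at_right \<alpha>. (z has_real_derivative h u - c - D u * g u / z u) (at u)
      \<and> 0 < z u \<and> D u < 0 \<and> \<bar>h u - c\<bar> \<le> M \<and> L * (u - \<alpha>) powr \<tau> \<le> g u"
  proof eventually_elim
    case (elim u)
    then have u: "u \<in> {0<..<1} - E" "u \<in> {\<alpha><..<1} - E" "\<gamma> < u" "\<bar>u - \<gamma>\<bar> < \<delta>"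
      using \<alpha> assms(1) by auto
    moreover have "0 < g u" using g_pos u by auto
    ultimately have "L * (u - \<alpha>) powr \<tau> \<le> g u" using holder[of u] assms(1) by simp
    then show ?case using z_deriv[of u] z_pos[of u] D_neg M(2)[of u] u by auto
  qed
  ultimately show ?thesis
    by (rule D_div_z_integrable_right_of_degenerate_point[where D=D and e=\<alpha>, OF \<tau> L K M(1) D_alpha])
qed

lemma D_div_z_integrable_left_of_gamma:
  assumes "\<alpha> < \<gamma>" and "holder_below g \<gamma>" and "z \<gamma> = 0"
  shows "\<exists>\<epsilon>>0. (\<lambda>u. D u / z u) integrable_on {\<gamma>-\<epsilon>..\<gamma>}"
proof -
  obtain L \<tau> \<delta> where L: "0 < L" and \<tau>: "0 < \<tau>" "\<tau> < 1" and "0 < \<delta>"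
    and holder: "\<And>u. u \<in> {0..1} \<Longrightarrow> \<bar>u - \<gamma>\<bar> < \<delta> \<Longrightarrow> L * \<bar>u - \<gamma>\<bar> powr \<tau> \<le> \<bar>g u\<bar>"
    using assms(2) unfolding holder_below_def by blast
  obtain M where M: "0 \<le> M" "\<And>u. u \<in> {0..1} \<Longrightarrow> \<bar>h u - c\<bar> \<le> M"
    by (rule h_minus_c_bound) blast
  obtain Dm where Dm: "\<And>u. u \<in> {0..1} \<Longrightarrow> \<bar>D u\<bar> \<le> Dm"
    using abs_bound_if_continuous_on_Icc[OF D_cont] by blast
  obtain d where "0 < d" and "\<forall>\<^sub>F u in at \<gamma>. D u < - d"
    using D_neg_near_gamma[OF assms(1)] by blast
  then have "\<forall>\<^sub>F u in at_left \<gamma>. D u < - d" unfolding eventually_at_split by blast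
  moreover have "\<forall>\<^sub>F u in at_left \<gamma>. u \<in> {max \<alpha> (\<gamma> - \<delta>)<..<\<gamma>} - E"
    using assms(1) \<open>0 < \<delta>\<close> by (intro eventually_at_left_avoiding_finite E(1)) simp
  ultimately have "\<forall>\<^sub>F u in at_left \<gamma>. (z has_real_derivative h u - c - D u * g u / z u) (at u)
      \<and> 0 < z u \<and> isCont D u \<and> D u \<le> - d \<and> \<bar>D u\<bar> \<le> Dm \<and> \<bar>h u - c\<bar> \<le> M
      \<and> L * (\<gamma> - u) powr \<tau> \<le> - g u"
  proof eventually_elim
    case (elim u)
    then have u: "u \<in> {0<..<1} - E" "u \<in> {\<alpha><..<1} - E" "u < \<gamma>" "\<bar>u - \<gamma>\<bar> < \<delta>"
      using \<alpha> \<gamma> by auto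
    moreover have "g u < 0" using g_neg u by auto
    ultimately have "L * (\<gamma> - u) powr \<tau> \<le> - g u" using holder[of u] by simp
    then show ?case
      using elim z_deriv[of u] z_pos[of u] isCont_if_continuous_on_Icc[OF D_cont, of u]
        Dm[of u] M(2)[of u] u
      by auto
  qed
  moreover have "isCont z \<gamma>" using isCont_if_continuous_on_Icc[OF z_cont] \<gamma> by simp
  ultimately show ?thesis
    using D_div_z_integrable_left_of_zero[where z=z and e=\<gamma>, OF \<tau> L \<open>0 < d\<close> M(1) _ assms(3)]
    by blast
qed

lemma D_div_z_integrable_right_of_gamma:
  assumes "\<alpha> < \<gamma>" and "holder_below g \<gamma>" and "z \<gamma> = 0"
  shows "\<exists>\<epsilon>>0. (\<lambda>u. D u / z u) integrable_on {\<gamma>..\<gamma>+\<epsilon>}"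
proof -
  obtain L \<tau> \<delta> where L: "0 < L" and \<tau>: "0 < \<tau>" "\<tau> < 1" and "0 < \<delta>"
    and holder: "\<And>u. u \<in> {0..1} \<Longrightarrow> \<bar>u - \<gamma>\<bar> < \<delta> \<Longrightarrow> L * \<bar>u - \<gamma>\<bar> powr \<tau> \<le> \<bar>g u\<bar>"
    using assms(2) unfolding holder_below_def by blast
  obtain M where M: "0 \<le> M" "\<And>u. u \<in> {0..1} \<Longrightarrow> \<bar>h u - c\<bar> \<le> M"
    by (rule h_minus_c_bound) blast
  obtain Dm where Dm: "\<And>u. u \<in> {0..1} \<Longrightarrow> \<bar>D u\<bar> \<le> Dm"
    using abs_bound_if_continuous_on_Icc[OF D_cont] by blast
  obtain d where "0 < d" and "\<forall>\<^sub>F u in at \<gamma>. D u < - d"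
    using D_neg_near_gamma[OF assms(1)] by blast
  then have "\<forall>\<^sub>F u in at_right \<gamma>. D u < - d" unfolding eventually_at_split by blast
  moreover have "\<forall>\<^sub>F u in at_right \<gamma>. u \<in> {\<gamma><..<min 1 (\<gamma> + \<delta>)} - E"
    using \<gamma> \<open>0 < \<delta>\<close> by (intro eventually_at_right_avoiding_finite E(1)) simp
  ultimately have "\<forall>\<^sub>F u in at_right \<gamma>. (z has_real_derivative h u - c - D u * g u / z u) (at u)
      \<and> 0 < z u \<and> isCont D u \<and> D u \<le> - d \<and> \<bar>D u\<bar> \<le> Dm \<and> \<bar>h u - c\<bar> \<le> M
      \<and> L * (u - \<gamma>) powr \<tau> \<le> g u"
  proof eventually_elim
    case (elim u)
    then have u: "u \<in> {0<..<1} - E" "u \<in> {\<alpha><..<1} - E" "\<gamma> < u" "\<bar>u - \<gamma>\<bar> < \<delta>"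
      using assms(1) \<gamma> by auto
    moreover have "0 < g u" using g_pos u by auto
    ultimately have "L * (u - \<gamma>) powr \<tau> \<le> g u" using holder[of u] by simp
    then show ?case
      using elim z_deriv[of u] z_pos[of u] isCont_if_continuous_on_Icc[OF D_cont, of u]
        Dm[of u] M(2)[of u] u
      by auto
  qed
  moreover have "isCont z \<gamma>" using isCont_if_continuous_on_Icc[OF z_cont] \<gamma> by simp
  ultimately show ?thesis
    using D_div_z_integrable_right_of_zero[where z=z and e=\<gamma>, OF \<tau> L \<open>0 < d\<close> M(1) _ assms(3)]
    by blast
qed

end

context forward_backward_diffusion
begin

lemma wavefront_if_solution_vanishing_at_alpha:
  assumes "\<exists>z z'. continuous_on {0..1} z
              \<and> (\<forall>u\<in>{0<..<1} - {\<alpha>}. (z has_real_derivative z' u) (at u))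
              \<and> continuous_on ({0<..<1} - {\<alpha>}) z'
              \<and> (\<forall>u\<in>{0<..<1} - {\<alpha>}. z' u = h u - c - D u * g u / z u)
              \<and> (\<forall>u. 0 < u \<and> u < \<alpha> \<longrightarrow> z u < 0)
              \<and> (\<forall>u. \<alpha> < u \<and> u < 1 \<longrightarrow> z u > 0)
              \<and> z 0 = 0 \<and> z \<alpha> = 0 \<and> z 1 = 0
              \<and> (\<alpha> \<noteq> \<gamma> \<or> (\<alpha> = \<gamma> \<and> holder_below g \<gamma>))"
  shows "\<exists>\<phi>. wavefront D f g c \<phi> \<and> (\<phi> \<longlongrightarrow> 1) at_bot \<and> (\<phi> \<longlongrightarrow> 0) at_top"
proof -
  obtain z z' where "continuous_on {0..1} z"
    and "\<forall>u\<in>{0<..<1} - {\<alpha>}. (z has_real_derivative z' u) (at u)"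
    and "\<forall>u\<in>{0<..<1} - {\<alpha>}. z' u = h u - c - D u * g u / z u"
    and "\<forall>u. 0 < u \<and> u < \<alpha> \<longrightarrow> z u < 0" and "\<forall>u. \<alpha> < u \<and> u < 1 \<longrightarrow> z u > 0"
    and "z 0 = 0" "z \<alpha> = 0" "z 1 = 0"
    and cases: "\<alpha> \<noteq> \<gamma> \<or> (\<alpha> = \<gamma> \<and> holder_below g \<gamma>)"
    using assms by blast
  then interpret forward_backward_solution f h D g \<alpha> \<gamma> c z "{\<alpha>}"
    using \<alpha> by unfold_locales auto
  have "\<exists>\<delta>>0. (\<lambda>u. D u / z u) integrable_on {\<alpha>-\<delta>..\<alpha>+\<delta>}"
  proof (cases "\<alpha> = \<gamma>")
    case True
    then show ?thesis using cases
      by (intro integrable_on_neighbourhood_if_both_sides D_div_z_integrable_left_of_alpha_if_eq_gamma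
          D_div_z_integrable_right_of_alpha_if_eq_gamma) auto
  qed (rule D_div_z_integrable_near_alpha_if_ne_gamma)
  then show ?thesis by (intro wavefront_if_D_div_z_integrable_near_E) simp
qed

lemma wavefront_if_solution_vanishing_at_alpha_and_gamma:
  assumes "\<alpha> < \<gamma>" and "holder_below g \<gamma>"
    and "\<exists>z z'. continuous_on {0..1} z
              \<and> (\<forall>u\<in>{0<..<1} - {\<alpha>, \<gamma>}. (z has_real_derivative z' u) (at u))
              \<and> continuous_on ({0<..<1} - {\<alpha>, \<gamma>}) z'
              \<and> (\<forall>u\<in>{0<..<1} - {\<alpha>, \<gamma>}. z' u = h u - c - D u * g u / z u)
              \<and> (\<forall>u. 0 < u \<and> u < \<alpha> \<longrightarrow> z u < 0)
              \<and> (\<forall>u. \<alpha> < u \<and> u < 1 \<and> u \<noteq> \<gamma> \<longrightarrow> z u > 0)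
              \<and> z 0 = 0 \<and> z \<alpha> = 0 \<and> z 1 = 0 \<and> z \<gamma> = 0"
  shows "\<exists>\<phi>. wavefront D f g c \<phi> \<and> (\<phi> \<longlongrightarrow> 1) at_bot \<and> (\<phi> \<longlongrightarrow> 0) at_top"
proof -
  obtain z z' where "continuous_on {0..1} z"
    and "\<forall>u\<in>{0<..<1} - {\<alpha>, \<gamma>}. (z has_real_derivative z' u) (at u)"
    and "\<forall>u\<in>{0<..<1} - {\<alpha>, \<gamma>}. z' u = h u - c - D u * g u / z u"
    and "\<forall>u. 0 < u \<and> u < \<alpha> \<longrightarrow> z u < 0" and "\<forall>u. \<alpha> < u \<and> u < 1 \<and> u \<noteq> \<gamma> \<longrightarrow> z u > 0"
    and "z 0 = 0" "z \<alpha> = 0" "z 1 = 0" and z_\<gamma>: "z \<gamma> = 0"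
    using assms(3) by blast
  then interpret forward_backward_solution f h D g \<alpha> \<gamma> c z "{\<alpha>, \<gamma>}"
    using \<alpha> \<gamma> by unfold_locales auto
  have "\<exists>\<delta>>0. (\<lambda>u. D u / z u) integrable_on {\<gamma>-\<delta>..\<gamma>+\<delta>}"
    using assms by (intro integrable_on_neighbourhood_if_both_sides D_div_z_integrable_left_of_gamma
        D_div_z_integrable_right_of_gamma z_\<gamma>)
  moreover have "\<exists>\<delta>>0. (\<lambda>u. D u / z u) integrable_on {\<alpha>-\<delta>..\<alpha>+\<delta>}"
    using assms(1) by (intro D_div_z_integrable_near_alpha_if_ne_gamma) simp
  ultimately show ?thesis by (intro wavefront_if_D_div_z_integrable_near_E) auto
qed

end

theorem proposition3p2:
  fixes f h D g :: "real \<Rightarrow> real" and \<alpha> \<gamma> c :: real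
  assumes f_C1: "\<forall>u\<in>{0..1}. (f has_real_derivative h u) (at u within {0..1})"
      and h_cont: "continuous_on {0..1} h"
      and f0: "f 0 = 0"
      and D_C1: "\<exists>D'. (\<forall>u\<in>{0..1}. (D has_real_derivative D' u) (at u within {0..1}))
                      \<and> continuous_on {0..1} D'"
      and \<alpha>: "0 < \<alpha>" "\<alpha> < 1"
      and D_pos: "\<forall>u. 0 < u \<and> u < \<alpha> \<longrightarrow> D u > 0"
      and D_neg: "\<forall>u. \<alpha> < u \<and> u < 1 \<longrightarrow> D u < 0"
      and g_cont: "continuous_on {0..1} g"
      and \<gamma>: "0 < \<gamma>" "\<gamma> < 1"
      and g_neg: "\<forall>u. 0 < u \<and> u < \<gamma> \<longrightarrow> g u < 0"
      and g_pos: "\<forall>u. \<gamma> < u \<and> u < 1 \<longrightarrow> g u > 0"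
      and g_zeros: "g 0 = 0" "g \<gamma> = 0" "g 1 = 0"
      and hyp:
        "(\<exists>z z'. continuous_on {0..1} z
              \<and> (\<forall>u\<in>{0<..<1} - {\<alpha>}. (z has_real_derivative z' u) (at u))
              \<and> continuous_on ({0<..<1} - {\<alpha>}) z'
              \<and> (\<forall>u\<in>{0<..<1} - {\<alpha>}. z' u = h u - c - D u * g u / z u)
              \<and> (\<forall>u. 0 < u \<and> u < \<alpha> \<longrightarrow> z u < 0)
              \<and> (\<forall>u. \<alpha> < u \<and> u < 1 \<longrightarrow> z u > 0)
              \<and> z 0 = 0 \<and> z \<alpha> = 0 \<and> z 1 = 0
              \<and> (\<alpha> \<noteq> \<gamma> \<or> (\<alpha> = \<gamma> \<and> holder_below g \<gamma>)))
         \<or> (\<alpha> < \<gamma> \<and> holder_below g \<gamma> \<and>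
            (\<exists>z z'. continuous_on {0..1} z
              \<and> (\<forall>u\<in>{0<..<1} - {\<alpha>, \<gamma>}. (z has_real_derivative z' u) (at u))
              \<and> continuous_on ({0<..<1} - {\<alpha>, \<gamma>}) z'
              \<and> (\<forall>u\<in>{0<..<1} - {\<alpha>, \<gamma>}. z' u = h u - c - D u * g u / z u)
              \<and> (\<forall>u. 0 < u \<and> u < \<alpha> \<longrightarrow> z u < 0)
              \<and> (\<forall>u. \<alpha> < u \<and> u < 1 \<and> u \<noteq> \<gamma> \<longrightarrow> z u > 0)
              \<and> z 0 = 0 \<and> z \<alpha> = 0 \<and> z 1 = 0 \<and> z \<gamma> = 0))"
  shows "\<exists>\<phi>. wavefront D f g c \<phi> \<and> (\<phi> \<longlongrightarrow> 1) at_bot \<and> (\<phi> \<longlongrightarrow> 0) at_top"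
proof -
  interpret forward_backward_diffusion f h D g \<alpha> \<gamma> c
    using f_C1 h_cont D_C1 \<alpha> D_pos D_neg g_cont \<gamma> g_neg g_pos g_zeros by unfold_locales
  show ?thesis
    using hyp wavefront_if_solution_vanishing_at_alpha wavefront_if_solution_vanishing_at_alpha_and_gamma
    by blast
qed

end
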